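(* Let $T=[0,T_0]$ for some $T_0>0$ or $T=[0,\infty)$, and let $(u,\beta)$ and $(v,\gamma)$ be solutions to mass-conserving double-obstacle AC flow on $T$ with $u(0)=v(0)$. Then $u(t)=v(t)$ for all $t\in T$, and there exists $\tilde T\subseteq T$ with $T\setminus\tilde T$ of Lebesgue measure zero such that for all $t\in\tilde T$, $\beta(t)-\gamma(t)=(\overline{\beta(t)}-\overline{\gamma(t)})\mathbf 1$. Furthermore, if $u_i(t)\in(0,1)$ for some $i\in V$ and $t\in\tilde T$, then $\beta(t)=\gamma(t)$.
   Context: $G=(V,E)$ is a finite, simple, connected, undirected graph with weights $\omega_{ij}=\omega_{ji}>0$ for $ij\in E$, $\omega_{ij}=0$ otherwise; $d_i=\sum_j\omega_{ij}$, $r\in[0,1]$ fixed. $\mathcal V$ = functions $V\to\mathbb R$ with $\langle u,v\rangle_{\mathcal V}=\sum_i u_iv_id_i^r$; $\mathcal V_X$ = functions $V\to X$. $(\Delta u)_i=d_i^{-r}\sum_j\omega_{ij}(u_i-u_j)$. $\mathbf 1$ all-ones; $\mathcal M(u)=\langle u,\mathbf 1\rangle_{\mathcal V}$; $\bar v=\mathcal M(v)/\mathcal M(\mathbf 1)$. $\varepsilon>0$. For $u\in\mathcal V_{[0,1]}$, $\mathcal B(u)$ = set of $\beta\in\mathcal V$ with $\beta_i\ge0$ if $u_i=0$, $\beta_i=0$ if $0<u_i<1$, $\beta_i\le0$ if $u_i=1$; $\mathcal B(u)=\emptyset$ otherwise. $H^1_{loc}(T;\mathcal V)$: functions $T\to\mathcal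 V$ whose components lie in $H^1((a,b))$ for all $a,b\in T$, with weak derivative $du/dt$. A pair $(u,\beta)$ with $u:T\to\mathcal V_{[0,1]}$, $\beta:T\to\mathcal V$ is a solution to mass-conserving double-obstacle AC flow on $T$ if $u\in H^1_{loc}(T;\mathcal V)\cap C^0(T;\mathcal V)$ and for a.e. $t\in T$: $\varepsilon \frac{du}{dt} + \varepsilon\Delta u(t)-u(t)+\overline{u(t)}\mathbf{1} = \beta(t) - \overline{\beta(t)}\mathbf{1}$ and $\beta(t)\in\mathcal B(u(t))$. *)

theory Defs
  imports "HOL-Analysis.Analysis"
begin

definition weighted_graph :: "('v::finite \<Rightarrow> 'v \<Rightarrow> real) \<Rightarrow> bool" where
  "weighted_graph w \<longleftrightarrow>
     (\<forall>i j. w i j = w j i) \<and> (\<forall>i j. 0 \<le> w i j) \<and> (\<forall>i. w i i = 0) \<and>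
     (\<forall>i j. (i, j) \<in> {(x, y). 0 < w x y}\<^sup>*)"

definition deg :: "('v::finite \<Rightarrow> 'v \<Rightarrow> real) \<Rightarrow> 'v \<Rightarrow> real" where
  "deg w i = (\<Sum>j\<in>UNIV. w i j)"

definition inner_V :: "('v::finite \<Rightarrow> 'v \<Rightarrow> real) \<Rightarrow> real \<Rightarrow> ('v \<Rightarrow> real) \<Rightarrow> ('v \<Rightarrow> real) \<Rightarrow> real" where
  "inner_V w r u v = (\<Sum>i\<in>UNIV. u i * v i * deg w i powr r)"

definition graph_laplacian :: "('v::finite \<Rightarrow> 'v \<Rightarrow> real) \<Rightarrow> real \<Rightarrow> ('v \<Rightarrow> real) \<Rightarrow> 'v \<Rightarrow> real" where
  "graph_laplacian w r u i = deg w i powr (- r) * (\<Sum>j\<in>UNIV. w i j * (u i - u j))"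

definition mass :: "('v::finite \<Rightarrow> 'v \<Rightarrow> real) \<Rightarrow> real \<Rightarrow> ('v \<Rightarrow> real) \<Rightarrow> real" where
  "mass w r u = inner_V w r u (\<lambda>_. 1)"

definition mean :: "('v::finite \<Rightarrow> 'v \<Rightarrow> real) \<Rightarrow> real \<Rightarrow> ('v \<Rightarrow> real) \<Rightarrow> real" where
  "mean w r v = mass w r v / mass w r (\<lambda>_. 1)"

definition obstacle_set :: "('v \<Rightarrow> real) \<Rightarrow> ('v \<Rightarrow> real) set" where
  "obstacle_set u = (if (\<forall>i. u i \<in> {0..1})
     then {\<beta>. \<forall>i. (u i = 0 \<longrightarrow> 0 \<le> \<beta> i) \<and> (0 < u i \<and> u i < 1 \<longrightarrow> \<beta> i = 0)
                   \<and> (u i = 1 \<longrightarrow> \<beta> i \<le> 0)}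
     else {})"

definition test_fun :: "real \<Rightarrow> real \<Rightarrow> (real \<Rightarrow> real) \<Rightarrow> bool" where
  "test_fun a b \<phi> \<longleftrightarrow> (\<forall>k x. ((deriv ^^ k) \<phi>) differentiable (at x)) \<and>
     compact (closure {x. \<phi> x \<noteq> 0}) \<and> closure {x. \<phi> x \<noteq> 0} \<subseteq> {a<..<b}"

definition L2_on :: "real \<Rightarrow> real \<Rightarrow> (real \<Rightarrow> real) \<Rightarrow> bool" where
  "L2_on a b f \<longleftrightarrow> set_borel_measurable lebesgue {a<..<b} f \<and>
     set_integrable lebesgue {a<..<b} (\<lambda>x. (f x)\<^sup>2)"

definition H1_weak_deriv :: "real \<Rightarrow> real \<Rightarrow> (real \<Rightarrow> real) \<Rightarrow> (real \<Rightarrow> real) \<Rightarrow> bool" where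
  "H1_weak_deriv a b f g \<longleftrightarrow> L2_on a b f \<and> L2_on a b g \<and>
     (\<forall>\<phi>. test_fun a b \<phi> \<longrightarrow>
        (LINT x:{a<..<b}|lebesgue. f x * deriv \<phi> x) = - (LINT x:{a<..<b}|lebesgue. g x * \<phi> x))"

definition H1_loc_deriv :: "real set \<Rightarrow> (real \<Rightarrow> 'v \<Rightarrow> real) \<Rightarrow> (real \<Rightarrow> 'v \<Rightarrow> real) \<Rightarrow> bool" where
  "H1_loc_deriv T u du \<longleftrightarrow>
     (\<forall>a\<in>T. \<forall>b\<in>T. \<forall>i. H1_weak_deriv a b (\<lambda>t. u t i) (\<lambda>t. du t i))"

definition mc_double_obstacle_AC_solution ::
  "('v::finite \<Rightarrow> 'v \<Rightarrow> real) \<Rightarrow> real \<Rightarrow> real \<Rightarrow> real set \<Rightarrow>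
   (real \<Rightarrow> 'v \<Rightarrow> real) \<Rightarrow> (real \<Rightarrow> 'v \<Rightarrow> real) \<Rightarrow> bool" where
  "mc_double_obstacle_AC_solution w r \<epsilon> T u \<beta> \<longleftrightarrow>
     (\<forall>t\<in>T. \<forall>i. u t i \<in> {0..1}) \<and>
     (\<forall>i. continuous_on T (\<lambda>t. u t i)) \<and>
     (\<exists>du. H1_loc_deriv T u du \<and>
        (AE t in lebesgue. t \<in> T \<longrightarrow>
           (\<forall>i. \<epsilon> * du t i + \<epsilon> * graph_laplacian w r (u t) i - u t i + mean w r (u t)
                 = \<beta> t i - mean w r (\<beta> t)) \<and>
           \<beta> t \<in> obstacle_set (u t)))"

end

theory Submission
  imports Defs "HOL-Computational_Algebra.Polynomial"
begin

text \<open>For two solutions \<open>(u, \<beta>)\<close> and \<open>(v, \<gamma>)\<close>, the difference \<open>W = u - v\<close> starts at \<open>0\<close> and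
  has zero mass, since the equation conserves mass. Testing the difference of the equations
  with \<open>W\<close> kills the mean terms, the Laplacian contributes a nonnegative Dirichlet energy and
  the multipliers contribute \<open>\<langle>\<beta> - \<gamma>, W\<rangle> \<le> 0\<close> by monotonicity of the obstacle
  constraint. Hence \<open>d/dt \<parallel>W\<parallel>\<^sup>2 \<le> (2/\<epsilon>) \<parallel>W\<parallel>\<^sup>2\<close> and Gronwall gives \<open>W = 0\<close>. The weak time
  derivatives of \<open>u\<close> and \<open>v\<close> then agree almost everywhere, so the two equations force
  \<open>\<beta> - \<gamma>\<close> to be the constant \<open>mean \<beta> - mean \<gamma>\<close>; at a vertex strictly between the
  obstacles both multipliers vanish, so that constant is \<open>0\<close>.

  For \<open>H\<^sup>1\<close> time derivatives this needs the fundamental theorem of calculus for weak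
  derivatives, obtained by testing against smooth plateaus built from \<open>exp(-1/x)\<close>, and the
  chain rule \<open>(G\<^sup>2)' = 2 g G\<close> for primitives in integrated form.\<close>

section \<open>Smooth plateau functions\<close>

fun n_times_differentiable :: "nat \<Rightarrow> (real \<Rightarrow> real) \<Rightarrow> bool" where
  "n_times_differentiable 0 f = True"
| "n_times_differentiable (Suc n) f =
     (\<exists>f'. (\<forall>x. (f has_real_derivative f' x) (at x)) \<and> n_times_differentiable n f')"

lemma n_times_differentiable_SucD:
  "n_times_differentiable (Suc n) f \<Longrightarrow> n_times_differentiable n f"
  by (induction n arbitrary: f) auto

lemma n_times_differentiable_add:
  "n_times_differentiable n f \<Longrightarrow> n_times_differentiable n g \<Longrightarrow>
   n_times_differentiable n (\<lambda>x. f x + g x)"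
proof (induction n arbitrary: f g)
  case (Suc n)
  then obtain f' g' where "\<forall>x. (f has_real_derivative f' x) (at x)" "n_times_differentiable n f'"
    "\<forall>x. (g has_real_derivative g' x) (at x)" "n_times_differentiable n g'" by auto
  with Suc.IH[of f' g'] show ?case by (auto intro!: exI[of _ "\<lambda>x. f' x + g' x"] DERIV_add)
qed simp

lemma n_times_differentiable_cmult:
  "n_times_differentiable n f \<Longrightarrow> n_times_differentiable n (\<lambda>x. c * f x)"
proof (induction n arbitrary: f)
  case (Suc n)
  then obtain f' where "\<forall>x. (f has_real_derivative f' x) (at x)" "n_times_differentiable n f'" by auto
  with Suc.IH[of f'] show ?case by (auto intro!: exI[of _ "\<lambda>x. c * f' x"] DERIV_cmult)
qed simp

lemma n_times_differentiable_diff: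
  "n_times_differentiable n f \<Longrightarrow> n_times_differentiable n g \<Longrightarrow>
   n_times_differentiable n (\<lambda>x. f x - g x)"
  using n_times_differentiable_add[of n f "\<lambda>x. (-1) * g x"] n_times_differentiable_cmult[of n g "-1"]
  by simp

lemma n_times_differentiable_mult:
  "n_times_differentiable n f \<Longrightarrow> n_times_differentiable n g \<Longrightarrow>
   n_times_differentiable n (\<lambda>x. f x * g x)"
proof (induction n arbitrary: f g)
  case (Suc n)
  then obtain f' g' where f': "\<forall>x. (f has_real_derivative f' x) (at x)" "n_times_differentiable n f'"
    and g': "\<forall>x. (g has_real_derivative g' x) (at x)" "n_times_differentiable n g'" by auto
  have "n_times_differentiable n f" "n_times_differentiable n g"
    using Suc.prems n_times_differentiable_SucD by auto
  then have "n_times_differentiable n (\<lambda>x. f' x * g x + f x * g' x)"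
    using Suc.IH f' g' by (intro n_times_differentiable_add) auto
  moreover have "\<forall>x. ((\<lambda>x. f x * g x) has_real_derivative (f' x * g x + f x * g' x)) (at x)"
    using f' g' by (auto intro!: derivative_eq_intros)
  ultimately show ?case by auto
qed simp

lemma n_times_differentiable_affine:
  "n_times_differentiable n f \<Longrightarrow> n_times_differentiable n (\<lambda>x. f (c * x + d))"
proof (induction n arbitrary: f)
  case (Suc n)
  then obtain f' where f': "\<forall>x. (f has_real_derivative f' x) (at x)" "n_times_differentiable n f'" by auto
  have "n_times_differentiable n (\<lambda>x. c * f' (c * x + d))"
    using Suc.IH f' by (intro n_times_differentiable_cmult) auto
  moreover have "((\<lambda>x. f (c * x + d)) has_real_derivative (c * f' (c * x + d))) (at x)" for x
  proof -
    have "((\<lambda>x. c * x + d) has_real_derivative c) (at x)" by (auto intro!: derivative_eq_intros)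
    from DERIV_chain2[OF f'(1)[rule_format] this] show ?thesis by (simp add: mult.commute)
  qed
  ultimately show ?case by (auto intro!: exI[of _ "\<lambda>x. c * f' (c * x + d)"])
qed simp

lemma n_times_differentiable_iterated_deriv:
  "n_times_differentiable (n + k) f \<Longrightarrow> n_times_differentiable n ((deriv ^^ k) f)"
proof (induction k arbitrary: n)
  case (Suc k)
  then obtain f' where f': "\<forall>x. ((deriv ^^ k) f has_real_derivative f' x) (at x)"
    "n_times_differentiable n f'"
    using Suc.IH[of "Suc n"] by auto
  then have "deriv ((deriv ^^ k) f) = f'" using DERIV_imp_deriv by blast
  with f' show ?case by simp
qed simp

lemma iterated_deriv_differentiable:
  assumes "\<And>n. n_times_differentiable n f"
  shows "((deriv ^^ k) f) differentiable (at x)"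
  using n_times_differentiable_iterated_deriv[of 1 k f] assms
  by (auto simp: real_differentiable_def)

text \<open>The flat function \<open>exp(-1/x)\<close>: all its derivatives are of the form
  \<open>p(1/x) exp(-1/x)\<close> on \<open>x > 0\<close> and vanish on \<open>x \<le> 0\<close>.\<close>
definition flat_poly_exp :: "real poly \<Rightarrow> real \<Rightarrow> real" where
  "flat_poly_exp p x = (if 0 < x then poly p (1/x) * exp (-1/x) else 0)"

lemma poly_times_exp_minus_tendsto_0:
  fixes p :: "real poly"
  shows "((\<lambda>y. poly p y * y * exp (-y)) \<longlongrightarrow> 0) at_top"
proof -
  have eq: "poly p y * y * exp (-y) = (\<Sum>i\<le>degree p. coeff p i * (y ^ Suc i / exp y))" for y
    by (simp add: poly_altdef sum_distrib_left sum_distrib_right sum_divide_distrib exp_minus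
        divide_inverse mult_ac)
  have "((\<lambda>y. \<Sum>i\<le>degree p. coeff p i * (y ^ Suc i / exp y)) \<longlongrightarrow> (\<Sum>i\<le>degree p. coeff p i * 0)) at_top"
    by (intro tendsto_intros tendsto_power_div_exp_0)
  then show ?thesis by (simp add: eq)
qed

lemma flat_poly_exp_has_derivative_0: "(flat_poly_exp p has_real_derivative 0) (at 0)"
proof -
  have "((\<lambda>h. (flat_poly_exp p (0 + h) - flat_poly_exp p 0) / h) \<longlongrightarrow> 0) (at_left 0)"
  proof (rule tendsto_eventually)
    show "\<forall>\<^sub>F h in at_left 0. (flat_poly_exp p (0 + h) - flat_poly_exp p 0) / h = 0"
      using eventually_at_left_real[of "-1" "0::real"]
      by (rule eventually_mono) (auto simp: flat_poly_exp_def)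
  qed
  moreover have "((\<lambda>h. (flat_poly_exp p (0 + h) - flat_poly_exp p 0) / h) \<longlongrightarrow> 0) (at_right 0)"
  proof (rule Lim_transform_eventually)
    show "((\<lambda>x. poly p (inverse x) * inverse x * exp (- inverse x)) \<longlongrightarrow> 0) (at_right 0)"
      using poly_times_exp_minus_tendsto_0[of p] unfolding filterlim_at_top_to_right .
    show "\<forall>\<^sub>F x in at_right 0. poly p (inverse x) * inverse x * exp (- inverse x)
            = (flat_poly_exp p (0 + x) - flat_poly_exp p 0) / x"
      using eventually_at_right_real[of "0::real" 1]
      by (rule eventually_mono) (auto simp: flat_poly_exp_def field_simps)
  qed
  ultimately have "((\<lambda>h. (flat_poly_exp p (0 + h) - flat_poly_exp p 0) / h) \<longlongrightarrow> 0) (at 0)"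
    by (simp add: filterlim_at_split)
  then show ?thesis by (simp add: DERIV_def)
qed

lemma flat_poly_exp_has_derivative:
  "(flat_poly_exp p has_real_derivative flat_poly_exp ([:0,0,1:] * (p - pderiv p)) x) (at x)"
proof (cases x "0::real" rule: linorder_cases)
  case less
  have "((\<lambda>x. 0) has_real_derivative flat_poly_exp ([:0,0,1:] * (p - pderiv p)) x) (at x)"
    using less by (simp add: flat_poly_exp_def)
  then show ?thesis
  proof (rule has_field_derivative_transform_within_open[of _ _ _ "{..<0}"])
    show "\<And>z. z \<in> {..<0} \<Longrightarrow> 0 = flat_poly_exp p z" by (simp add: flat_poly_exp_def)
  qed (use less in auto)
next
  case equal
  then show ?thesis using flat_poly_exp_has_derivative_0 by (simp add: flat_poly_exp_def)
next
  case greater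
  have "((\<lambda>x. poly p (1/x) * exp (-1/x)) has_real_derivative
     (poly (pderiv p) (1/x) * (- 1 / x\<^sup>2) * exp (-1/x) + poly p (1/x) * (exp (-1/x) * (1 / x\<^sup>2)))) (at x)"
    using greater
    by (auto intro!: derivative_eq_intros DERIV_chain2[OF poly_DERIV] simp: power2_eq_square field_simps)
  moreover have "poly (pderiv p) (1/x) * (- 1 / x\<^sup>2) * exp (-1/x) + poly p (1/x) * (exp (-1/x) * (1 / x\<^sup>2))
      = flat_poly_exp ([:0,0,1:] * (p - pderiv p)) x"
    using greater by (simp add: flat_poly_exp_def field_simps power2_eq_square)
  ultimately have "((\<lambda>x. poly p (1/x) * exp (-1/x)) has_real_derivative
      flat_poly_exp ([:0,0,1:] * (p - pderiv p)) x) (at x)" by simp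
  then show ?thesis
  proof (rule has_field_derivative_transform_within_open[of _ _ _ "{0<..}"])
    show "\<And>z. z \<in> {0<..} \<Longrightarrow> poly p (1 / z) * exp (- 1 / z) = flat_poly_exp p z"
      by (simp add: flat_poly_exp_def)
  qed (use greater in auto)
qed

lemma n_times_differentiable_flat_poly_exp: "n_times_differentiable n (flat_poly_exp p)"
proof (induction n arbitrary: p)
  case (Suc n)
  then show ?case using flat_poly_exp_has_derivative by auto
qed simp

definition bump :: "real \<Rightarrow> real" where
  "bump y = flat_poly_exp 1 (1 + y) * flat_poly_exp 1 (1 - y)"

lemma n_times_differentiable_bump: "n_times_differentiable n bump"
proof -
  have "n_times_differentiable n (\<lambda>y. flat_poly_exp 1 (1 * y + 1) * flat_poly_exp 1 ((-1) * y + 1))"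
    by (intro n_times_differentiable_mult n_times_differentiable_affine n_times_differentiable_flat_poly_exp)
  then show ?thesis unfolding bump_def by (simp add: add.commute)
qed

lemma continuous_on_bump: "continuous_on S bump"
proof -
  obtain b' where "\<forall>x. (bump has_real_derivative b' x) (at x)"
    using n_times_differentiable_bump[of 1] by auto
  then show ?thesis by (meson DERIV_isCont continuous_at_imp_continuous_on)
qed

lemma bump_nonneg: "0 \<le> bump y"
  by (simp add: bump_def flat_poly_exp_def)

lemma bump_eq_0: "y \<le> -1 \<or> 1 \<le> y \<Longrightarrow> bump y = 0"
  by (auto simp: bump_def flat_poly_exp_def)

lemma integral_bump_pos: "0 < integral {-2..1} bump"
proof -
  have "integral {-2..1} bump \<noteq> 0"
  proof
    assume "integral {-2..1} bump = 0"
    then have "\<forall>x\<in>{-2..1}. bump x = 0"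
      using integral_eq_0_iff[of "-2" 1 bump] continuous_on_bump bump_nonneg by simp
    then have "bump 0 = 0" by simp
    then show False by (simp add: bump_def flat_poly_exp_def)
  qed
  moreover have "0 \<le> integral {-2..1} bump"
    by (intro integral_nonneg integrable_continuous_interval continuous_on_bump bump_nonneg)
  ultimately show ?thesis by simp
qed

definition mollifier :: "real \<Rightarrow> real" where
  "mollifier y = bump y / integral {-2..1} bump"

definition smooth_step :: "real \<Rightarrow> real" where
  "smooth_step y = integral {-2..y} bump / integral {-2..1} bump"

lemma mollifier_nonneg: "0 \<le> mollifier y"
  using integral_bump_pos bump_nonneg by (simp add: mollifier_def)

lemma mollifier_eq_0: "y \<le> -1 \<or> 1 \<le> y \<Longrightarrow> mollifier y = 0"
  by (simp add: mollifier_def bump_eq_0)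

lemma continuous_on_mollifier: "continuous_on S mollifier"
  unfolding mollifier_def[abs_def] using integral_bump_pos
  by (intro continuous_intros continuous_on_bump) auto

lemma continuous_on_mollifier_compose [continuous_intros]:
  "continuous_on S g \<Longrightarrow> continuous_on S (\<lambda>x. mollifier (g x))"
  by (rule continuous_on_compose2[OF continuous_on_mollifier[of UNIV]]) auto

lemma smooth_step_eq_0: "y \<le> -1 \<Longrightarrow> smooth_step y = 0"
proof -
  assume y: "y \<le> -1"
  have "(bump has_integral 0) {-2..y}"
    by (rule has_integral_is_0) (use y bump_eq_0 in auto)
  then show ?thesis by (simp add: smooth_step_def integral_unique)
qed

lemma smooth_step_eq_1: "1 \<le> y \<Longrightarrow> smooth_step y = 1"
proof -
  assume y: "1 \<le> y"
  have "(bump has_integral 0) {1..y}"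
    by (rule has_integral_is_0) (use y bump_eq_0 in auto)
  then have "integral {-2..y} bump = integral {-2..1} bump"
    using Henstock_Kurzweil_Integration.integral_combine[where a="-2" and c=1 and b=y and f=bump] y integrable_continuous_interval[OF continuous_on_bump]
    by (simp add: integral_unique)
  then show ?thesis using integral_bump_pos by (simp add: smooth_step_def)
qed

lemma smooth_step_nonneg: "0 \<le> smooth_step y"
  unfolding smooth_step_def using integral_bump_pos
  by (intro divide_nonneg_pos integral_nonneg integrable_continuous_interval continuous_on_bump bump_nonneg)
     auto

lemma smooth_step_le_1: "smooth_step y \<le> 1"
proof (cases "y \<le> 1")
  case True
  have "integral {-2..y} bump \<le> integral {-2..1} bump"
    by (rule integral_subset_le)
       (use True in \<open>auto intro: integrable_continuous_interval continuous_on_bump bump_nonneg\<close>)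
  then show ?thesis using integral_bump_pos by (simp add: smooth_step_def)
qed (simp add: smooth_step_eq_1)

lemma smooth_step_has_derivative: "(smooth_step has_real_derivative mollifier y) (at y)"
proof (cases "y < -1")
  case True
  have "((\<lambda>x. 0) has_real_derivative mollifier y) (at y)"
    using True by (simp add: mollifier_eq_0)
  then show ?thesis
    by (rule has_field_derivative_transform_within_open[of _ _ _ "{..<-1}"])
       (use True smooth_step_eq_0 in auto)
next
  case False
  have "((\<lambda>x. integral {-2..x} bump) has_real_derivative bump y) (at y within {-2..y+1})"
    by (rule integral_has_real_derivative) (use False in \<open>auto intro: continuous_on_bump\<close>)
  moreover have "at y within {-2..y+1} = at y"
    by (rule at_within_interior) (use False in auto)
  ultimately have "((\<lambda>x. integral {-2..x} bump) has_real_derivative bump y) (at y)" by simp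
  from DERIV_cdivide[OF this, of "integral {-2..1} bump"] show ?thesis
    by (simp add: smooth_step_def[abs_def] mollifier_def)
qed

lemma n_times_differentiable_smooth_step: "n_times_differentiable n smooth_step"
proof (cases n)
  case (Suc m)
  have "n_times_differentiable m (\<lambda>y. (1 / integral {-2..1} bump) * bump y)"
    by (intro n_times_differentiable_cmult n_times_differentiable_bump)
  then have "n_times_differentiable m mollifier" by (simp add: mollifier_def[abs_def])
  then show ?thesis using Suc smooth_step_has_derivative by auto
qed simp

lemma continuous_on_smooth_step_compose [continuous_intros]:
  "continuous_on S g \<Longrightarrow> continuous_on S (\<lambda>x. smooth_step (g x))"
proof (rule continuous_on_compose2[of UNIV smooth_step])
  show "continuous_on UNIV smooth_step"
    using smooth_step_has_derivative DERIV_isCont continuous_at_imp_continuous_on by blast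
qed auto

lemma continuous_on_shift_divide: "continuous_on S (\<lambda>x::real. (x - c) / d)"
  by (cases "d = 0") (auto intro!: continuous_intros)

lemma smooth_step_shift_has_derivative:
  "((\<lambda>x. smooth_step ((x - c) / d)) has_real_derivative mollifier ((x - c) / d) / d) (at x)"
proof (cases "d = 0")
  case False
  have "((\<lambda>x. (x - c) / d) has_real_derivative 1 / d) (at x)"
    using False by (auto intro!: derivative_eq_intros)
  from DERIV_chain2[OF smooth_step_has_derivative this] show ?thesis by simp
qed simp

text \<open>Testing a weak derivative against these smooth approximations of the indicator of
  \<open>(s, t)\<close> yields the fundamental theorem of calculus.\<close>
definition plateau :: "real \<Rightarrow> real \<Rightarrow> real \<Rightarrow> real \<Rightarrow> real" where
  "plateau s t d x = smooth_step ((x - s) / d) - smooth_step ((x - t) / d)"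

definition plateau_deriv :: "real \<Rightarrow> real \<Rightarrow> real \<Rightarrow> real \<Rightarrow> real" where
  "plateau_deriv s t d x = mollifier ((x - s) / d) / d - mollifier ((x - t) / d) / d"

lemma deriv_plateau: "deriv (plateau s t d) = plateau_deriv s t d"
proof -
  have "(plateau s t d has_real_derivative plateau_deriv s t d x) (at x)" for x
    unfolding plateau_def[abs_def] plateau_deriv_def
    by (intro DERIV_diff smooth_step_shift_has_derivative)
  then show ?thesis using DERIV_imp_deriv by blast
qed

lemma
  assumes "0 < d" "s \<le> t" "x \<le> s - d \<or> t + d \<le> x"
  shows plateau_eq_0: "plateau s t d x = 0"
    and plateau_deriv_eq_0: "plateau_deriv s t d x = 0"
proof -
  have "((x - s) / d \<le> -1 \<and> (x - t) / d \<le> -1) \<or> (1 \<le> (x - s) / d \<and> 1 \<le> (x - t) / d)"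
    using assms by (auto simp: field_simps)
  then show "plateau s t d x = 0" "plateau_deriv s t d x = 0"
    by (auto simp: plateau_def plateau_deriv_def smooth_step_eq_0 smooth_step_eq_1 mollifier_eq_0)
qed

lemma plateau_eq_1: "0 < d \<Longrightarrow> s + d \<le> x \<Longrightarrow> x \<le> t - d \<Longrightarrow> plateau s t d x = 1"
  by (simp add: plateau_def smooth_step_eq_0 smooth_step_eq_1 field_simps)

lemma abs_plateau_le_1: "\<bar>plateau s t d x\<bar> \<le> 1"
  using smooth_step_nonneg[of "(x - s) / d"] smooth_step_le_1[of "(x - s) / d"]
    smooth_step_nonneg[of "(x - t) / d"] smooth_step_le_1[of "(x - t) / d"]
  by (simp add: plateau_def abs_le_iff)

lemma continuous_on_plateau: "continuous_on S (plateau s t d)"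
  unfolding plateau_def[abs_def] by (intro continuous_intros continuous_on_shift_divide)

lemma continuous_on_plateau_deriv: "continuous_on S (plateau_deriv s t d)"
proof (cases "d = 0")
  case False
  then show ?thesis
    unfolding plateau_deriv_def[abs_def]
    by (intro continuous_on_diff continuous_on_divide continuous_on_mollifier_compose
        continuous_on_shift_divide continuous_on_const) auto
qed (simp add: plateau_deriv_def)

lemma test_fun_plateau:
  assumes d: "0 < d" and st: "s \<le> t" and ab: "a < s - d" "t + d < b"
  shows "test_fun a b (plateau s t d)"
proof -
  have "plateau s t d = (\<lambda>x. smooth_step ((1/d) * x + (- s / d)) - smooth_step ((1/d) * x + (- t / d)))"
    by (auto simp: plateau_def diff_divide_distrib)
  then have "n_times_differentiable n (plateau s t d)" for n
    by (simp only:) (intro n_times_differentiable_diff n_times_differentiable_affine n_times_differentiable_smooth_step)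
  moreover have support: "{x. plateau s t d x \<noteq> 0} \<subseteq> {s - d .. t + d}"
    using plateau_eq_0[OF d st] by (metis (mono_tags) atLeastAtMost_iff mem_Collect_eq nle_le subsetI)
  then have "compact (closure {x. plateau s t d x \<noteq> 0})"
    by (meson bounded_subset compact_closure compact_imp_bounded compact_Icc)
  moreover have "closure {x. plateau s t d x \<noteq> 0} \<subseteq> {s - d .. t + d}"
    using support by (intro closure_minimal) auto
  ultimately show ?thesis
    unfolding test_fun_def using ab iterated_deriv_differentiable by force
qed

section \<open>The fundamental theorem of calculus for weak derivatives\<close>

lemma set_integral_eq_integral_support:
  fixes h :: "real \<Rightarrow> real"
  assumes h: "continuous_on {p..q} h" and sub: "{p..q} \<subseteq> {a<..<b}"
    and zero: "\<And>x. x \<notin> {p..q} \<Longrightarrow> h x = 0"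
  shows "(LINT x:{a<..<b}|lebesgue. h x) = integral {p..q} h"
proof -
  have "(LINT x:{a<..<b}|lebesgue. h x) = (LINT x:{p..q}|lebesgue. h x)"
    unfolding set_lebesgue_integral_def
    by (rule Bochner_Integration.integral_cong) (use sub zero in \<open>auto simp: indicator_def\<close>)
  also have "\<dots> = integral {p..q} h"
    by (rule set_lebesgue_integral_eq_integral(2)[OF absolutely_integrable_continuous_real[OF h]])
  finally show ?thesis .
qed

lemma mollifier_approximation:
  fixes f :: "real \<Rightarrow> real"
  assumes f: "continuous_on {p..q} f" and d: "0 < d" and c: "p \<le> c - d" "c + d \<le> q"
    and e: "\<And>x. x \<in> {p..q} \<Longrightarrow> \<bar>x - c\<bar> \<le> d \<Longrightarrow> \<bar>f x - f c\<bar> \<le> e"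
  shows "\<bar>integral {p..q} (\<lambda>x. f x * (mollifier ((x - c) / d) / d)) - f c\<bar> \<le> e"
proof -
  define \<rho> where "\<rho> x = mollifier ((x - c) / d) / d" for x
  have \<rho>_cont: "continuous_on {p..q} \<rho>"
    unfolding \<rho>_def[abs_def] using d
    by (intro continuous_on_divide continuous_on_mollifier_compose continuous_on_shift_divide
        continuous_on_const) auto
  have \<rho>_nonneg: "0 \<le> \<rho> x" for x using mollifier_nonneg d by (simp add: \<rho>_def)
  have \<rho>_zero: "\<rho> x = 0" if "d < \<bar>x - c\<bar>" for x
  proof -
    have "(x - c) / d \<le> -1 \<or> 1 \<le> (x - c) / d"
      using that d by (auto simp: field_simps abs_if split: if_splits)
    then show ?thesis by (simp add: \<rho>_def mollifier_eq_0)
  qed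
  have "(\<rho> has_integral (smooth_step ((q - c) / d) - smooth_step ((p - c) / d))) {p..q}"
    unfolding \<rho>_def
    by (rule fundamental_theorem_of_calculus)
       (use c d in \<open>auto intro!: has_real_derivative_iff_has_vector_derivative[THEN iffD1,
          OF DERIV_subset[OF smooth_step_shift_has_derivative]]\<close>)
  moreover have "smooth_step ((q - c) / d) = 1" "smooth_step ((p - c) / d) = 0"
    using c d by (auto intro!: smooth_step_eq_1 smooth_step_eq_0 simp: field_simps)
  ultimately have integral_\<rho>: "integral {p..q} \<rho> = 1" by (simp add: integral_unique)
  have \<rho>_int: "\<rho> integrable_on {p..q}" by (intro integrable_continuous_interval \<rho>_cont)
  have "integral {p..q} (\<lambda>x. f x * \<rho> x) - f c = integral {p..q} (\<lambda>x. (f x - f c) * \<rho> x)"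
    using integral_\<rho> \<rho>_int
    by (simp add: left_diff_distrib integral_diff integrable_continuous_interval continuous_intros
        f \<rho>_cont)
  also have "\<bar>\<dots>\<bar> \<le> integral {p..q} (\<lambda>x. e * \<rho> x)"
    unfolding real_norm_def[symmetric]
  proof (rule integral_norm_bound_integral)
    show "(\<lambda>x. (f x - f c) * \<rho> x) integrable_on {p..q}" "(\<lambda>x. e * \<rho> x) integrable_on {p..q}"
      by (intro integrable_continuous_interval continuous_intros f \<rho>_cont)+
    fix x assume x: "x \<in> {p..q}"
    show "norm ((f x - f c) * \<rho> x) \<le> e * \<rho> x"
    proof (cases "\<bar>x - c\<bar> \<le> d")
      case True
      then show ?thesis using e[OF x True] \<rho>_nonneg[of x] by (simp add: abs_mult mult_right_mono)
    qed (simp add: \<rho>_zero)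
  qed
  also have "\<dots> = e" using integral_\<rho> by simp
  finally show ?thesis unfolding \<rho>_def .
qed

lemma mollifier_integral_tendsto:
  fixes f :: "real \<Rightarrow> real"
  assumes f: "continuous_on {p..q} f" and c: "p < c" "c < q"
    and d: "d \<longlonglongrightarrow> 0" "\<And>n. 0 < d n"
  shows "(\<lambda>n. integral {p..q} (\<lambda>x. f x * (mollifier ((x - c) / d n) / d n))) \<longlonglongrightarrow> f c"
proof (rule LIMSEQ_I)
  fix e :: real assume e: "0 < e"
  obtain \<delta> where \<delta>: "0 < \<delta>" "\<And>x. x \<in> {p..q} \<Longrightarrow> dist x c < \<delta> \<Longrightarrow> dist (f x) (f c) < e / 2"
    using f c e unfolding continuous_on_iff by (metis half_gt_zero atLeastAtMost_iff less_imp_le)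
  have "eventually (\<lambda>n. d n < \<delta> \<and> d n < c - p \<and> d n < q - c) sequentially"
    using \<delta>(1) c by (intro eventually_conj order_tendstoD(2)[OF d(1)]) auto
  then obtain N where N: "\<And>n. N \<le> n \<Longrightarrow> d n < \<delta> \<and> d n < c - p \<and> d n < q - c"
    by (auto simp: eventually_sequentially)
  show "\<exists>N. \<forall>n\<ge>N. norm (integral {p..q} (\<lambda>x. f x * (mollifier ((x - c) / d n) / d n)) - f c) < e"
  proof (intro exI allI impI)
    fix n assume n: "N \<le> n"
    have "\<bar>integral {p..q} (\<lambda>x. f x * (mollifier ((x - c) / d n) / d n)) - f c\<bar> \<le> e / 2"
    proof (rule mollifier_approximation[OF f d(2)])
      show "p \<le> c - d n" "c + d n \<le> q" using N[OF n] by auto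
      fix x assume "x \<in> {p..q}" "\<bar>x - c\<bar> \<le> d n"
      then show "\<bar>f x - f c\<bar> \<le> e / 2" using \<delta>(2)[of x] N[OF n] by (simp add: dist_real_def)
    qed
    then show "norm (integral {p..q} (\<lambda>x. f x * (mollifier ((x - c) / d n) / d n)) - f c) < e"
      using e by simp
  qed
qed

lemma tendsto_set_integral_mult_bounded:
  fixes g :: "real \<Rightarrow> real"
  assumes g: "set_integrable lebesgue S g"
    and c: "\<And>n. c n \<in> borel_measurable lebesgue" "c' \<in> borel_measurable lebesgue"
    and bounded: "\<And>n x. \<bar>c n x\<bar> \<le> 1"
    and lim: "AE x in lebesgue. (\<lambda>n. c n x) \<longlonglongrightarrow> c' x"
  shows "(\<lambda>n. LINT x:S|lebesgue. g x * c n x) \<longlonglongrightarrow> (LINT x:S|lebesgue. g x * c' x)"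
  unfolding set_lebesgue_integral_def
proof (rule integral_dominated_convergence[where w = "\<lambda>x. \<bar>indicator S x *\<^sub>R g x\<bar>"])
  have gm: "(\<lambda>x. indicator S x *\<^sub>R g x) \<in> borel_measurable lebesgue"
    using g unfolding set_integrable_def by (rule borel_measurable_integrable)
  show "(\<lambda>x. indicat_real S x *\<^sub>R (g x * c' x)) \<in> borel_measurable lebesgue"
    using borel_measurable_times[OF gm c(2)] by (simp add: mult.assoc)
  show "(\<lambda>x. indicat_real S x *\<^sub>R (g x * c n x)) \<in> borel_measurable lebesgue" for n
    using borel_measurable_times[OF gm c(1)[of n]] by (simp add: mult.assoc)
  show "integrable lebesgue (\<lambda>x. \<bar>indicat_real S x *\<^sub>R g x\<bar>)"
    using g unfolding set_integrable_def by (rule integrable_abs)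
  show "AE x in lebesgue. (\<lambda>n. indicat_real S x *\<^sub>R (g x * c n x)) \<longlonglongrightarrow> indicat_real S x *\<^sub>R (g x * c' x)"
    using lim by eventually_elim (intro tendsto_intros)
  show "AE x in lebesgue. norm (indicat_real S x *\<^sub>R (g x * c n x)) \<le> \<bar>indicat_real S x *\<^sub>R g x\<bar>" for n
  proof (rule AE_I2)
    fix x
    have "\<bar>g x * c n x\<bar> \<le> \<bar>g x\<bar>" using bounded[of n x] by (simp add: abs_mult mult_left_le)
    then show "norm (indicat_real S x *\<^sub>R (g x * c n x)) \<le> \<bar>indicat_real S x *\<^sub>R g x\<bar>"
      by (auto simp: indicator_def)
  qed
qed

lemma L2_on_set_integrable:
  assumes "L2_on a b g" shows "set_integrable lebesgue {a<..<b} g"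
proof -
  have "set_integrable lebesgue {a<..<b} (\<lambda>x. 1 + (g x)\<^sup>2)"
    using assms by (intro set_integral_add absolutely_integrable_on_const) (auto simp: L2_on_def)
  then show ?thesis
  proof (rule set_integrable_bound)
    show "set_borel_measurable lebesgue {a<..<b} g" using assms by (simp add: L2_on_def)
    have "\<bar>y\<bar> \<le> 1 + y\<^sup>2" for y :: real
    proof (cases "\<bar>y\<bar> \<le> 1")
      case False
      then have "\<bar>y\<bar> * 1 \<le> \<bar>y\<bar> * \<bar>y\<bar>" by (intro mult_left_mono) auto
      then show ?thesis by (simp add: power2_eq_square)
    qed (simp add: add_increasing2)
    then show "AE x in lebesgue. x \<in> {a<..<b} \<longrightarrow> norm (g x) \<le> norm (1 + (g x)\<^sup>2)"
      by (simp add: add_nonneg_nonneg)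
  qed
qed

lemma plateau_tendsto_indicator:
  assumes "s < t" "x \<noteq> s" "x \<noteq> t" and d: "d \<longlonglongrightarrow> 0" "\<And>n. 0 < d n"
  shows "(\<lambda>n. plateau s t (d n) x) \<longlonglongrightarrow> indicator {s<..<t} x"
proof (rule tendsto_eventually)
  have "0 < min \<bar>x - s\<bar> \<bar>x - t\<bar>" using assms by simp
  from order_tendstoD(2)[OF d(1) this] show "\<forall>\<^sub>F n in sequentially. plateau s t (d n) x = indicator {s<..<t} x"
  proof (rule eventually_mono)
    fix n assume dn: "d n < min \<bar>x - s\<bar> \<bar>x - t\<bar>"
    show "plateau s t (d n) x = indicator {s<..<t} x"
    proof (cases "x < s \<or> t < x")
      case True
      then have "x \<le> s - d n \<or> t + d n \<le> x" using dn by auto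
      then have "plateau s t (d n) x = 0" using plateau_eq_0[OF d(2)] \<open>s < t\<close> by simp
      then show ?thesis using True by (auto simp: indicator_def)
    next
      case False
      then have "s + d n \<le> x" "x \<le> t - d n" using dn assms by auto
      then show ?thesis using False plateau_eq_1[OF d(2)] assms by (simp add: indicator_def)
    qed
  qed
qed

lemma set_integral_mult_plateau_tendsto:
  fixes g :: "real \<Rightarrow> real"
  assumes g: "set_integrable lebesgue {a<..<b} g" and st: "a \<le> s" "s < t" "t \<le> b"
    and d: "d \<longlonglongrightarrow> 0" "\<And>n. 0 < d n"
  shows "(\<lambda>n. LINT x:{a<..<b}|lebesgue. g x * plateau s t (d n) x) \<longlonglongrightarrow> (LINT x:{s<..<t}|lebesgue. g x)"
proof -
  have "(\<lambda>n. LINT x:{a<..<b}|lebesgue. g x * plateau s t (d n) x) \<longlonglongrightarrow>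
      (LINT x:{a<..<b}|lebesgue. g x * indicator {s<..<t} x)"
  proof (rule tendsto_set_integral_mult_bounded[OF g])
    show "plateau s t (d n) \<in> borel_measurable lebesgue" for n
      using borel_measurable_continuous_onI[OF continuous_on_plateau]
      by (intro measurable_completion) simp
    show "indicat_real {s<..<t} \<in> borel_measurable lebesgue"
      by (intro borel_measurable_indicator) (meson fmeasurableD lmeasurable_interval(2))
    show "\<bar>plateau s t (d n) x\<bar> \<le> 1" for n x by (rule abs_plateau_le_1)
    have "AE x in lebesgue. x \<notin> {s, t}"
      by (rule AE_discrete_difference) auto
    then show "AE x in lebesgue. (\<lambda>n. plateau s t (d n) x) \<longlonglongrightarrow> indicat_real {s<..<t} x"
      by eventually_elim (use plateau_tendsto_indicator st d in auto)
  qed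
  moreover have "(LINT x:{a<..<b}|lebesgue. g x * indicator {s<..<t} x) = (LINT x:{s<..<t}|lebesgue. g x)"
    unfolding set_lebesgue_integral_def
    by (rule Bochner_Integration.integral_cong) (use st in \<open>auto simp: indicator_def\<close>)
  ultimately show ?thesis by simp
qed

lemma set_integral_mult_plateau_deriv_tendsto:
  fixes f :: "real \<Rightarrow> real"
  assumes f: "continuous_on {a..b} f" and st: "a < s - \<delta>" "s < t" "t + \<delta> < b"
    and d: "d \<longlonglongrightarrow> 0" "\<And>n. 0 < d n" "\<And>n. d n \<le> \<delta>"
  shows "(\<lambda>n. LINT x:{a<..<b}|lebesgue. f x * plateau_deriv s t (d n) x) \<longlonglongrightarrow> f s - f t"
proof -
  define I where "I c n = integral {s - \<delta>..t + \<delta>} (\<lambda>x. f x * (mollifier ((x - c) / d n) / d n))" for c n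
  have sub: "{s - \<delta>..t + \<delta>} \<subseteq> {a<..<b}" using st by auto
  have f': "continuous_on {s - \<delta>..t + \<delta>} f" by (rule continuous_on_subset[OF f]) (use st in auto)
  have "(LINT x:{a<..<b}|lebesgue. f x * plateau_deriv s t (d n) x) = I s n - I t n" for n
  proof -
    have cont: "continuous_on {s - \<delta>..t + \<delta>} (\<lambda>x. f x * (mollifier ((x - c) / d n) / d n))" for c
      using d(2)[of n] by (intro continuous_intros f' continuous_on_shift_divide) auto
    have "(LINT x:{a<..<b}|lebesgue. f x * plateau_deriv s t (d n) x)
        = integral {s - \<delta>..t + \<delta>} (\<lambda>x. f x * plateau_deriv s t (d n) x)"
    proof (rule set_integral_eq_integral_support[OF _ sub])
      show "continuous_on {s - \<delta>..t + \<delta>} (\<lambda>x. f x * plateau_deriv s t (d n) x)"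
        by (intro continuous_on_mult f' continuous_on_plateau_deriv)
      fix x assume "x \<notin> {s - \<delta>..t + \<delta>}"
      then have "x \<le> s - d n \<or> t + d n \<le> x" using d(3)[of n] by auto
      then show "f x * plateau_deriv s t (d n) x = 0" using plateau_deriv_eq_0[OF d(2)] st by auto
    qed
    also have "\<dots> = I s n - I t n"
      unfolding I_def plateau_deriv_def right_diff_distrib
      by (rule integral_diff[OF integrable_continuous_interval[OF cont] integrable_continuous_interval[OF cont]])
    finally show ?thesis .
  qed
  moreover have "(\<lambda>n. I s n - I t n) \<longlonglongrightarrow> f s - f t"
    unfolding I_def using st d(3)[of 0] d(2)[of 0]
    by (intro tendsto_diff mollifier_integral_tendsto[OF f'] d(1,2)) auto
  ultimately show ?thesis by simp
qed

lemma H1_weak_deriv_FTC_interior: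
  fixes f g :: "real \<Rightarrow> real"
  assumes H: "H1_weak_deriv a b f g" and f: "continuous_on {a..b} f"
    and st: "a < s" "s < t" "t < b"
  shows "f t - f s = (LINT x:{s<..<t}|lebesgue. g x)"
proof -
  define \<delta> where "\<delta> = min (s - a) (b - t) / 2"
  define d where "d n = \<delta> / real (Suc n)" for n
  have \<delta>: "a < s - \<delta>" "t + \<delta> < b" using st by (auto simp: \<delta>_def min_def field_simps)
  have d: "0 < d n" "d n \<le> \<delta>" for n
  proof -
    have "0 < \<delta>" using st by (simp add: \<delta>_def)
    then show "0 < d n" "d n \<le> \<delta>"
      using divide_left_mono[of 1 "real (Suc n)" \<delta>] by (auto simp: d_def)
  qed
  have d_lim: "d \<longlonglongrightarrow> 0"
    unfolding d_def using LIMSEQ_Suc[OF lim_const_over_n[of \<delta>]] by simp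
  have weak: "(LINT x:{a<..<b}|lebesgue. f x * deriv \<phi> x) = - (LINT x:{a<..<b}|lebesgue. g x * \<phi> x)"
    if "test_fun a b \<phi>" for \<phi>
    using H that by (simp add: H1_weak_deriv_def)
  have "test_fun a b (plateau s t (d n))" for n
    by (rule test_fun_plateau) (use d[of n] \<delta> st in auto)
  from weak[OF this] have eq: "(LINT x:{a<..<b}|lebesgue. f x * plateau_deriv s t (d n) x)
      = - (LINT x:{a<..<b}|lebesgue. g x * plateau s t (d n) x)" for n
    by (simp add: deriv_plateau)
  have "set_integrable lebesgue {a<..<b} g"
    using H by (simp add: H1_weak_deriv_def L2_on_set_integrable)
  from set_integral_mult_plateau_tendsto[OF this _ st(2) _ d_lim d(1)] st
  have "(\<lambda>n. LINT x:{a<..<b}|lebesgue. f x * plateau_deriv s t (d n) x) \<longlonglongrightarrow> - (LINT x:{s<..<t}|lebesgue. g x)"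
    unfolding eq by (intro tendsto_minus) auto
  moreover have "(\<lambda>n. LINT x:{a<..<b}|lebesgue. f x * plateau_deriv s t (d n) x) \<longlonglongrightarrow> f s - f t"
    by (rule set_integral_mult_plateau_deriv_tendsto[OF f \<delta>(1) st(2) \<delta>(2) d_lim d])
  ultimately have "f s - f t = - (LINT x:{s<..<t}|lebesgue. g x)"
    by (rule LIMSEQ_unique[rotated])
  then show ?thesis by simp
qed

lemma set_integral_shrinking_interval_tendsto:
  fixes g :: "real \<Rightarrow> real"
  assumes g: "set_integrable lebesgue {s<..<t} g" and e: "e \<longlonglongrightarrow> 0" "\<And>n. 0 \<le> e n"
  shows "(\<lambda>n. LINT x:{s + e n<..<t - e n}|lebesgue. g x) \<longlonglongrightarrow> (LINT x:{s<..<t}|lebesgue. g x)"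
proof -
  have "(\<lambda>n. LINT x:{s<..<t}|lebesgue. g x * indicator {s + e n<..<t - e n} x) \<longlonglongrightarrow>
      (LINT x:{s<..<t}|lebesgue. g x * indicator {s<..<t} x)"
  proof (rule tendsto_set_integral_mult_bounded[OF g])
    show "indicat_real {s + e n<..<t - e n} \<in> borel_measurable lebesgue"
      "indicat_real {s<..<t} \<in> borel_measurable lebesgue" for n
      by (intro borel_measurable_indicator; meson fmeasurableD lmeasurable_interval(2))+
    show "\<bar>indicat_real {s + e n<..<t - e n} x\<bar> \<le> 1" for n x by (simp add: indicator_def)
    show "AE x in lebesgue. (\<lambda>n. indicat_real {s + e n<..<t - e n} x) \<longlonglongrightarrow> indicat_real {s<..<t} x"
    proof (rule AE_I2)
      fix x
      show "(\<lambda>n. indicat_real {s + e n<..<t - e n} x) \<longlonglongrightarrow> indicat_real {s<..<t} x"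
      proof (cases "s < x \<and> x < t")
        case True
        then have "0 < min (x - s) (t - x)" by simp
        from order_tendstoD(2)[OF e(1) this]
        have "\<forall>\<^sub>F n in sequentially. indicat_real {s + e n<..<t - e n} x = indicat_real {s<..<t} x"
          by (rule eventually_mono) (use True in \<open>auto simp: indicator_def\<close>)
        then show ?thesis by (rule tendsto_eventually)
      next
        case False
        then have "indicat_real {s + e n<..<t - e n} x = 0" for n using e(2)[of n] by (auto simp: indicator_def)
        moreover have "indicat_real {s<..<t} x = 0" using False by (simp add: indicator_def)
        ultimately show ?thesis by simp
      qed
    qed
  qed
  moreover have "(LINT x:{s<..<t}|lebesgue. g x * indicator A x) = (LINT x:A|lebesgue. g x)"
    if "A \<subseteq> {s<..<t}" for A
    unfolding set_lebesgue_integral_def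
    by (rule Bochner_Integration.integral_cong) (use that in \<open>auto simp: indicator_def\<close>)
  moreover have "{s + e n<..<t - e n} \<subseteq> {s<..<t}" for n using e(2)[of n] by auto
  ultimately show ?thesis by simp
qed

lemma H1_weak_deriv_FTC:
  fixes f g :: "real \<Rightarrow> real"
  assumes H: "H1_weak_deriv s t f g" and f: "continuous_on {s..t} f" and "s \<le> t"
  shows "f t - f s = (LINT x:{s<..<t}|lebesgue. g x)"
proof (cases "s = t")
  case False
  then have st: "s < t" using \<open>s \<le> t\<close> by simp
  define e where "e n = (t - s) / 3 / real (Suc n)" for n
  have e: "0 < e n" "s < s + e n" "s + e n < t - e n" "t - e n < t" for n
  proof -
    have "0 < e n" using st by (simp add: e_def)
    moreover have "e n \<le> (t - s) / 3 / 1"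
      unfolding e_def using st by (intro divide_left_mono) auto
    ultimately show "0 < e n" "s < s + e n" "s + e n < t - e n" "t - e n < t" using st by auto
  qed
  have e_lim: "e \<longlonglongrightarrow> 0"
    unfolding e_def using LIMSEQ_Suc[OF lim_const_over_n[of "(t - s) / 3"]] by simp
  have "(\<lambda>n. t - e n) \<longlonglongrightarrow> t" "(\<lambda>n. s + e n) \<longlonglongrightarrow> s"
    using tendsto_diff[OF tendsto_const e_lim] tendsto_add[OF tendsto_const e_lim] by simp_all
  moreover have "t - e n \<in> {s..t}" "s + e n \<in> {s..t}" for n using e[of n] by auto
  ultimately have "(\<lambda>n. f (t - e n) - f (s + e n)) \<longlonglongrightarrow> f t - f s"
    using f st unfolding continuous_on_sequentially by (intro tendsto_diff) (auto simp: o_def)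
  moreover have "f (t - e n) - f (s + e n) = (LINT x:{s + e n<..<t - e n}|lebesgue. g x)" for n
    using e[of n] by (intro H1_weak_deriv_FTC_interior[OF H f]) auto
  moreover have "(\<lambda>n. LINT x:{s + e n<..<t - e n}|lebesgue. g x) \<longlonglongrightarrow> (LINT x:{s<..<t}|lebesgue. g x)"
    using H e_lim e(1) less_imp_le
    by (intro set_integral_shrinking_interval_tendsto) (auto simp: H1_weak_deriv_def intro: L2_on_set_integrable)
  ultimately show ?thesis using LIMSEQ_unique by force
qed (simp add: set_lebesgue_integral_def)

lemma H1_loc_deriv_set_integrable:
  "H1_loc_deriv T u du \<Longrightarrow> s \<in> T \<Longrightarrow> t \<in> T \<Longrightarrow> set_integrable lebesgue {s<..<t} (\<lambda>x. du x i)"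
  by (auto simp: H1_loc_deriv_def H1_weak_deriv_def intro: L2_on_set_integrable)

lemma H1_loc_deriv_FTC:
  assumes "H1_loc_deriv T u du" "continuous_on T (\<lambda>t. u t i)" "is_interval T"
    and "s \<in> T" "t \<in> T" "s \<le> t"
  shows "u t i - u s i = (LINT x:{s<..<t}|lebesgue. du x i)"
proof (rule H1_weak_deriv_FTC)
  show "H1_weak_deriv s t (\<lambda>t. u t i) (\<lambda>t. du t i)" using assms by (simp add: H1_loc_deriv_def)
  have "{s..t} \<subseteq> T" using mem_is_interval_1_I[OF assms(3-5)] by auto
  then show "continuous_on {s..t} (\<lambda>t. u t i)" using assms(2) by (rule continuous_on_subset[rotated])
qed fact

section \<open>Integrals on the real line\<close>

lemma lebesgue_integrable_borel_representative:
  fixes k :: "real \<Rightarrow> real"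
  assumes k: "integrable lebesgue k"
  obtains k' where "k' \<in> borel_measurable borel" "integrable lborel k'" "AE x in lebesgue. k x = k' x"
    "\<And>h. h \<in> borel_measurable borel \<Longrightarrow>
       integral\<^sup>L lebesgue (\<lambda>x. k x * h x) = integral\<^sup>L lborel (\<lambda>x. k' x * h x)"
proof -
  have k_meas: "k \<in> borel_measurable (completion lborel)" using k by (rule borel_measurable_integrable)
  obtain k' where k': "k' \<in> borel_measurable lborel" and "AE x in lborel. k x = k' x"
    using completion_ex_borel_measurable_real[OF k_meas] by blast
  then have ae: "AE x in lebesgue. k x = k' x" by (intro AE_completion)
  have "integrable lebesgue k'"
    using integrable_cong_AE[OF k_meas measurable_completion[OF k'] ae] k by simp
  then have "integrable lborel k'" using integrable_completion[OF k'] by simp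
  moreover have "integral\<^sup>L lebesgue (\<lambda>x. k x * h x) = integral\<^sup>L lborel (\<lambda>x. k' x * h x)"
    if h: "h \<in> borel_measurable borel" for h
  proof -
    have kh: "(\<lambda>x. k' x * h x) \<in> borel_measurable lborel" using k' h by simp
    have "integral\<^sup>L lebesgue (\<lambda>x. k x * h x) = integral\<^sup>L lebesgue (\<lambda>x. k' x * h x)"
    proof (rule integral_cong_AE)
      show "(\<lambda>x. k x * h x) \<in> borel_measurable lebesgue"
        using k_meas h by (intro borel_measurable_times) (auto intro: measurable_completion)
      show "(\<lambda>x. k' x * h x) \<in> borel_measurable lebesgue" using kh by (rule measurable_completion)
      show "AE x in lebesgue. k x * h x = k' x * h x" using ae by eventually_elim simp
    qed
    also have "\<dots> = integral\<^sup>L lborel (\<lambda>x. k' x * h x)" using integral_completion[OF kh] by simp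
    finally show ?thesis .
  qed
  ultimately show ?thesis using that k' ae by simp
qed

lemma AE_zero_if_tail_integrals_zero_lborel:
  fixes k :: "real \<Rightarrow> real"
  assumes k: "integrable lborel k" and tails: "\<And>x. integral\<^sup>L lborel (\<lambda>t. k t * indicator {x<..} t) = 0"
  shows "AE t in lborel. k t = 0"
proof -
  define P where "P t = max 0 (k t)" for t
  define N where "N t = max 0 (- k t)" for t
  have P: "integrable lborel P" "\<And>t. 0 \<le> P t"
    unfolding P_def by (auto intro: integrable_max k)
  have N: "integrable lborel N" "\<And>t. 0 \<le> N t"
    unfolding N_def using integrable_max[OF integrable_zero integrable_minus[OF k]] by auto
  have tail_measure: "emeasure (density lborel F) {x<..} = integral\<^sup>L lborel (\<lambda>t. F t * indicator {x<..} t)"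
    if F: "integrable lborel F" "\<And>t. 0 \<le> F t" for F and x :: real
  proof -
    have "emeasure (density lborel F) {x<..} = (\<integral>\<^sup>+t\<in>{x<..}. ennreal (F t) \<partial>lborel)"
      using borel_measurable_integrable[OF F(1)] by (subst emeasure_density) auto
    also have "\<dots> = (\<integral>\<^sup>+ t. ennreal (F t * indicator {x<..} t) \<partial>lborel)"
      by (rule nn_integral_set_ennreal)
    also have "\<dots> = integral\<^sup>L lborel (\<lambda>t. F t * indicator {x<..} t)"
      using F by (intro nn_integral_eq_integral) (auto intro: integrable_real_mult_indicator)
    finally show ?thesis .
  qed
  have "integral\<^sup>L lborel (\<lambda>t. P t * indicator {x<..} t) = integral\<^sup>L lborel (\<lambda>t. N t * indicator {x<..} t)" for x
  proof -
    have "(\<lambda>t. k t * indicator {x<..} t) = (\<lambda>t. P t * indicator {x<..} t - N t * indicator {x<..} t)"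
      by (auto simp: P_def N_def max_def fun_eq_iff)
    then show ?thesis
      using tails[of x] P(1) N(1) by (simp add: integrable_real_mult_indicator)
  qed
  then have "density lborel P = density lborel N"
    by (intro measure_eqI_lessThan) (simp_all add: tail_measure P N)
  then have "AE t in lborel. ennreal (P t) = ennreal (N t)"
    using borel_measurable_integrable[OF P(1)] borel_measurable_integrable[OF N(1)]
    by (simp add: sigma_finite_measure.density_unique_iff[OF sigma_finite_lborel])
  then show ?thesis
    by eventually_elim (auto simp: P_def N_def max_def split: if_splits)
qed

lemma AE_zero_if_tail_integrals_zero:
  fixes h :: "real \<Rightarrow> real"
  assumes h: "set_integrable lebesgue {a<..<b} h"
    and tails: "\<And>x. a \<le> x \<Longrightarrow> x \<le> b \<Longrightarrow> (LINT t:{x<..<b}|lebesgue. h t) = 0"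
  shows "AE t in lebesgue. t \<in> {a<..<b} \<longrightarrow> h t = 0"
proof -
  define k where "k t = indicator {a<..<b} t * h t" for t
  have "integrable lebesgue k" using h by (simp add: set_integrable_def k_def[abs_def])
  then obtain k' where k': "integrable lborel k'" "AE t in lebesgue. k t = k' t"
    and integral_k: "\<And>g. g \<in> borel_measurable borel \<Longrightarrow>
       integral\<^sup>L lebesgue (\<lambda>t. k t * g t) = integral\<^sup>L lborel (\<lambda>t. k' t * g t)"
    by (rule lebesgue_integrable_borel_representative) blast
  have "integral\<^sup>L lebesgue (\<lambda>t. k t * indicator {x<..} t) = 0" for x
  proof (cases "x < b")
    case True
    have "(\<lambda>t. k t * indicator {x<..} t) = (\<lambda>t. indicator {max a x<..<b} t *\<^sub>R h t)"
      by (auto simp: k_def indicator_def fun_eq_iff)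
    then show ?thesis using tails[of "max a x"] True
      by (cases "a \<le> b") (auto simp: set_lebesgue_integral_def)
  next
    case False
    then have "(\<lambda>t. k t * indicator {x<..} t) = (\<lambda>t. 0)"
      by (auto simp: k_def indicator_def fun_eq_iff)
    then show ?thesis by simp
  qed
  then have "AE t in lborel. k' t = 0"
    using integral_k by (intro AE_zero_if_tail_integrals_zero_lborel k') auto
  then have "AE t in lebesgue. k' t = 0" by (rule AE_completion)
  with k'(2) show ?thesis by eventually_elim (auto simp: k_def indicator_def)
qed

lemma AE_zero_if_interval_integrals_zero:
  fixes h :: "real \<Rightarrow> real"
  assumes T: "is_interval T"
    and h: "\<And>s t. s \<in> T \<Longrightarrow> t \<in> T \<Longrightarrow> set_integrable lebesgue {s<..<t} h"
    and zero: "\<And>s t. s \<in> T \<Longrightarrow> t \<in> T \<Longrightarrow> s \<le> t \<Longrightarrow> (LINT x:{s<..<t}|lebesgue. h x) = 0"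
  shows "AE x in lebesgue. x \<in> T \<longrightarrow> h x = 0"
proof -
  have "AE x in lebesgue. x \<in> {s<..<t} \<longrightarrow> h x = 0" if "s \<in> T" "t \<in> T" for s t
  proof (rule AE_zero_if_tail_integrals_zero[OF h[OF that]])
    fix x assume "s \<le> x" "x \<le> t"
    then show "(LINT y:{x<..<t}|lebesgue. h y) = 0"
      using T that unfolding is_interval_1 by (intro zero) blast+
  qed
  then have "AE x in lebesgue. \<forall>p\<in>\<rat> \<times> \<rat>. fst p \<in> T \<longrightarrow> snd p \<in> T \<longrightarrow> x \<in> {fst p<..<snd p} \<longrightarrow> h x = 0"
    by (subst AE_ball_countable) (auto intro: countable_SIGMA countable_rat)
  moreover have "AE x in lebesgue. x \<notin> frontier T"
    using negligible_convex_frontier[OF is_interval_convex[OF T]]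
    by (intro AE_not_in) (simp add: negligible_iff_null_sets)
  ultimately show ?thesis
  proof eventually_elim
    case (elim x)
    show ?case
    proof
      assume "x \<in> T"
      then have "x \<in> interior T" using elim(2) closure_subset by (auto simp: frontier_def)
      then obtain e where e: "0 < e" "ball x e \<subseteq> T" by (meson mem_interior)
      obtain p q where pq: "p \<in> \<rat>" "x - e < p" "p < x" "q \<in> \<rat>" "x < q" "q < x + e"
        using Rats_dense_in_real[of "x - e" x] Rats_dense_in_real[of x "x + e"] e(1) by auto
      then have "p \<in> T" "q \<in> T" using e(2) by (auto simp: dist_real_def)
      then show "h x = 0" using elim(1) pq by force
    qed
  qed
qed

lemma integrable_mult_bounded:
  fixes g h :: "'a \<Rightarrow> real"
  assumes g: "integrable M g" and h: "h \<in> borel_measurable M" "\<And>x. \<bar>h x\<bar> \<le> C"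
  shows "integrable M (\<lambda>x. g x * h x)"
proof (rule Bochner_Integration.integrable_bound[of M "\<lambda>x. C * \<bar>g x\<bar>"])
  show "integrable M (\<lambda>x. C * \<bar>g x\<bar>)" using g by (intro integrable_mult_right integrable_abs)
  show "(\<lambda>x. g x * h x) \<in> borel_measurable M"
    using borel_measurable_integrable[OF g] h(1) by (rule borel_measurable_times)
  show "AE x in M. norm (g x * h x) \<le> norm (C * \<bar>g x\<bar>)"
  proof (rule AE_I2)
    fix x
    have "0 \<le> C" using h(2)[of x] by linarith
    moreover have "\<bar>g x * h x\<bar> \<le> \<bar>g x\<bar> * C" unfolding abs_mult by (intro mult_left_mono h(2)) simp
    ultimately show "norm (g x * h x) \<le> norm (C * \<bar>g x\<bar>)" by (simp add: abs_mult mult.commute)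
  qed
qed

lemma measurable_pred_greaterThan_pair [measurable]:
  "Measurable.pred (borel \<Otimes>\<^sub>M borel) (\<lambda>x::real \<times> real. snd x \<in> {fst x<..})"
  unfolding greaterThan_iff by measurable

lemma measurable_pred_lessThan_pair [measurable]:
  "Measurable.pred (borel \<Otimes>\<^sub>M borel) (\<lambda>x::real \<times> real. snd x \<in> {..<fst x})"
  unfolding lessThan_iff by measurable

lemma abs_integral_mult_indicator_le:
  fixes g :: "real \<Rightarrow> real"
  assumes g: "integrable lborel g" and "A \<in> sets borel"
  shows "\<bar>integral\<^sup>L lborel (\<lambda>y. g y * indicator A y)\<bar> \<le> integral\<^sup>L lborel (\<lambda>y. \<bar>g y\<bar>)"
proof -
  have "\<bar>integral\<^sup>L lborel (\<lambda>y. g y * indicator A y)\<bar> \<le> integral\<^sup>L lborel (\<lambda>y. \<bar>g y * indicator A y\<bar>)"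
    by (rule integral_abs_bound)
  also have "\<dots> \<le> integral\<^sup>L lborel (\<lambda>y. \<bar>g y\<bar>)"
    using assms by (intro integral_mono integrable_abs integrable_real_mult_indicator)
      (auto simp: indicator_def abs_mult)
  finally show ?thesis .
qed

lemma integrable_pair_mult_indicator_less:
  fixes g :: "real \<Rightarrow> real"
  assumes g: "integrable lborel g"
  shows "integrable (lborel \<Otimes>\<^sub>M lborel) (\<lambda>(x, y). g x * (g y * indicator {x<..} y))"
proof (rule lborel_pair.Fubini_integrable)
  have [measurable]: "g \<in> borel_measurable borel" using borel_measurable_integrable[OF g] by simp
  show "(\<lambda>(x, y). g x * (g y * indicator {x<..} y)) \<in> borel_measurable (lborel \<Otimes>\<^sub>M lborel)"
    by measurable
  have "integrable lborel (\<lambda>x. \<bar>g x\<bar> * integral\<^sup>L lborel (\<lambda>y. \<bar>g y\<bar> * indicator {x<..} y))"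
  proof (rule integrable_mult_bounded)
    show "integrable lborel (\<lambda>x. \<bar>g x\<bar>)" using g by simp
    show "(\<lambda>x. integral\<^sup>L lborel (\<lambda>y. \<bar>g y\<bar> * indicator {x<..} y)) \<in> borel_measurable lborel"
      by (rule lborel.borel_measurable_lebesgue_integral) measurable
    show "\<bar>integral\<^sup>L lborel (\<lambda>y. \<bar>g y\<bar> * indicator {x<..} y)\<bar> \<le> integral\<^sup>L lborel (\<lambda>y. \<bar>g y\<bar>)" for x
      using abs_integral_mult_indicator_le[of "\<lambda>y. \<bar>g y\<bar>" "{x<..}"] g by simp
  qed
  moreover have "(\<lambda>x. \<integral>y. norm (g x * (g y * indicator {x<..} y)) \<partial>lborel)
      = (\<lambda>x. \<bar>g x\<bar> * integral\<^sup>L lborel (\<lambda>y. \<bar>g y\<bar> * indicator {x<..} y))"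
    by (auto simp: abs_mult fun_eq_iff indicator_def)
  ultimately show "integrable lborel (\<lambda>x. \<integral>y. norm (case (x, y) of (x, y) \<Rightarrow> g x * (g y * indicator {x<..} y)) \<partial>lborel)"
    by simp
  show "AE x in lborel. integrable lborel (\<lambda>y. case (x, y) of (x, y) \<Rightarrow> g x * (g y * indicator {x<..} y))"
    using g by (auto intro!: integrable_mult_right integrable_real_mult_indicator)
qed

text \<open>The integral form of \<open>(G\<^sup>2)' = 2 g G\<close> for \<open>G\<close> the primitive of \<open>g\<close>: by Fubini,
  \<open>(\<integral>g)\<^sup>2\<close> splits into the two triangles \<open>y < x\<close> and \<open>x < y\<close>, which have equal integrals.\<close>
lemma square_integral_lborel:
  fixes g :: "real \<Rightarrow> real"
  assumes g: "integrable lborel g"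
  shows "(integral\<^sup>L lborel g)\<^sup>2
    = 2 * integral\<^sup>L lborel (\<lambda>x. g x * integral\<^sup>L lborel (\<lambda>y. g y * indicator {..<x} y))"
proof -
  have [measurable]: "g \<in> borel_measurable borel" using borel_measurable_integrable[OF g] by simp
  define below where "below x = integral\<^sup>L lborel (\<lambda>y. g y * indicator {..<x} y)" for x
  define above where "above x = integral\<^sup>L lborel (\<lambda>y. g y * indicator {x<..} y)" for x
  have "integral\<^sup>L lborel (\<lambda>x. g x * (g y * indicator {x<..} y)) = g y * below y" for y
  proof -
    have "(\<lambda>x. g x * (g y * indicator {x<..} y)) = (\<lambda>x. g y * (g x * indicator {..<y} x))"
      by (auto simp: indicator_def fun_eq_iff)
    then show ?thesis by (simp add: below_def)
  qed
  then have "integral\<^sup>L lborel (\<lambda>y. g y * below y) = integral\<^sup>L lborel (\<lambda>x. g x * above x)"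
    using lborel_pair.Fubini_integral[OF integrable_pair_mult_indicator_less[OF g]]
    by (simp add: above_def)
  moreover have "below x + above x = integral\<^sup>L lborel g" for x
  proof -
    have "below x + above x = integral\<^sup>L lborel (\<lambda>y. g y * indicator {..<x} y + g y * indicator {x<..} y)"
      unfolding below_def above_def using g
      by (intro Bochner_Integration.integral_add[symmetric] integrable_real_mult_indicator) auto
    also have "\<dots> = integral\<^sup>L lborel g"
      by (rule integral_discrete_difference[where X="{x}"]) (auto simp: indicator_def)
    finally show ?thesis .
  qed
  then have "(integral\<^sup>L lborel g)\<^sup>2 = integral\<^sup>L lborel (\<lambda>x. g x * below x + g x * above x)"
    by (simp add: power2_eq_square distrib_left[symmetric])
  moreover have "integrable lborel (\<lambda>x. g x * below x)" "integrable lborel (\<lambda>x. g x * above x)"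
  proof -
    have "below \<in> borel_measurable lborel" "above \<in> borel_measurable lborel"
      unfolding below_def above_def by (rule lborel.borel_measurable_lebesgue_integral; measurable)+
    then show "integrable lborel (\<lambda>x. g x * below x)" "integrable lborel (\<lambda>x. g x * above x)"
      unfolding below_def above_def using abs_integral_mult_indicator_le[OF g]
      by (auto intro!: integrable_mult_bounded[OF g, where C = "integral\<^sup>L lborel (\<lambda>y. \<bar>g y\<bar>)"])
  qed
  ultimately show ?thesis by (simp add: below_def)
qed

lemma square_set_integral:
  fixes h :: "real \<Rightarrow> real"
  assumes h: "set_integrable lebesgue {a<..<b} h"
  shows "(LINT x:{a<..<b}|lebesgue. h x)\<^sup>2
    = 2 * (LINT x:{a<..<b}|lebesgue. h x * (LINT y:{a<..<x}|lebesgue. h y))"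
proof -
  define k where "k t = indicator {a<..<b} t * h t" for t
  have "integrable lebesgue k" using h by (simp add: set_integrable_def k_def[abs_def])
  then obtain k' where k': "k' \<in> borel_measurable borel" "integrable lborel k'"
    and integral_k: "\<And>g. g \<in> borel_measurable borel \<Longrightarrow>
       integral\<^sup>L lebesgue (\<lambda>t. k t * g t) = integral\<^sup>L lborel (\<lambda>t. k' t * g t)"
    by (rule lebesgue_integrable_borel_representative) blast
  note [measurable] = k'(1)
  define below where "below x = integral\<^sup>L lborel (\<lambda>y. k' y * indicator {..<x} y)" for x
  have "below \<in> borel_measurable lborel" unfolding below_def
    by (rule lborel.borel_measurable_lebesgue_integral) measurable
  then have below_meas: "below \<in> borel_measurable borel" by simp
  have "below x = (LINT y:{a<..<x}|lebesgue. h y)" if "x \<in> {a<..<b}" for x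
  proof -
    have "(\<lambda>y. k y * indicator {..<x} y) = (\<lambda>y. indicator {a<..<x} y *\<^sub>R h y)"
      using that by (auto simp: k_def indicator_def fun_eq_iff)
    then show ?thesis
      using integral_k[of "indicator {..<x}"] by (simp add: below_def set_lebesgue_integral_def)
  qed
  then have "(\<lambda>x. k x * below x) = (\<lambda>x. indicator {a<..<b} x *\<^sub>R (h x * (LINT y:{a<..<x}|lebesgue. h y)))"
    by (auto simp: k_def fun_eq_iff indicator_def)
  moreover have "(LINT x:{a<..<b}|lebesgue. h x) = integral\<^sup>L lborel k'"
    using integral_k[of "\<lambda>_. 1"] by (simp add: set_lebesgue_integral_def k_def[abs_def])
  ultimately show ?thesis
    using square_integral_lborel[OF k'(2)] integral_k[OF below_meas]
    by (simp add: set_lebesgue_integral_def below_def)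
qed

lemma square_primitive:
  fixes g W :: "real \<Rightarrow> real"
  assumes g: "set_integrable lebesgue {a<..<b} g" and "a \<le> b"
    and W: "\<And>t. t \<in> {a..b} \<Longrightarrow> W t = (LINT x:{a<..<t}|lebesgue. g x)"
  shows "(W b)\<^sup>2 = 2 * (LINT x:{a<..<b}|lebesgue. g x * W x)"
proof -
  have "(W b)\<^sup>2 = 2 * (LINT x:{a<..<b}|lebesgue. g x * (LINT y:{a<..<x}|lebesgue. g y))"
    using W[of b] \<open>a \<le> b\<close> square_set_integral[OF g] by simp
  also have "(LINT x:{a<..<b}|lebesgue. g x * (LINT y:{a<..<x}|lebesgue. g y))
      = (LINT x:{a<..<b}|lebesgue. g x * W x)"
    by (intro set_lebesgue_integral_cong) (auto simp: W)
  finally show ?thesis .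
qed

lemma
  fixes f :: "'i \<Rightarrow> 'a \<Rightarrow> real"
  assumes f: "\<And>i. i \<in> I \<Longrightarrow> set_integrable M A (f i)"
  shows set_integrable_sum: "set_integrable M A (\<lambda>x. \<Sum>i\<in>I. f i x)"
    and set_integral_sum: "(LINT x:A|M. (\<Sum>i\<in>I. f i x)) = (\<Sum>i\<in>I. LINT x:A|M. f i x)"
proof -
  have eq: "(\<lambda>x. indicator A x *\<^sub>R (\<Sum>i\<in>I. f i x)) = (\<lambda>x. \<Sum>i\<in>I. indicator A x *\<^sub>R f i x)"
    by (simp add: sum_distrib_left)
  show "set_integrable M A (\<lambda>x. \<Sum>i\<in>I. f i x)"
    unfolding set_integrable_def eq using f by (intro Bochner_Integration.integrable_sum) (simp add: set_integrable_def)
  show "(LINT x:A|M. (\<Sum>i\<in>I. f i x)) = (\<Sum>i\<in>I. LINT x:A|M. f i x)"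
    unfolding set_lebesgue_integral_def eq using f
    by (intro Bochner_Integration.integral_sum) (simp add: set_integrable_def)
qed

lemma set_integral_Ioo_eq_integral:
  fixes f :: "real \<Rightarrow> real"
  assumes "continuous_on {a..b} f"
  shows "(LINT x:{a<..<b}|lebesgue. f x) = integral {a..b} f"
proof -
  have "f absolutely_integrable_on {a<..<b}"
    using absolutely_integrable_continuous_real[OF assms] absolutely_integrable_on_Icc_iff_Ioo by blast
  then have "(LINT x:{a<..<b}|lebesgue. f x) = integral {a<..<b} f"
    by (rule set_lebesgue_integral_eq_integral(2))
  also have "\<dots> = integral {a..b} f"
    by (rule integral_spike_set) (auto intro: negligible_subset[of "{a,b}"])
  finally show ?thesis .
qed

lemma set_integrable_mult_continuous:
  fixes g h :: "real \<Rightarrow> real"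
  assumes g: "set_integrable lebesgue {a<..<b} g" and h: "continuous_on {a..b} h"
  shows "set_integrable lebesgue {a<..<b} (\<lambda>y. g y * h y)"
proof -
  have "bounded (h ` {a<..<b})"
    using compact_imp_bounded[OF compact_continuous_image[OF h compact_Icc]] by (rule bounded_subset) auto
  moreover have "h \<in> borel_measurable (lebesgue_on {a<..<b})"
    using h by (intro continuous_imp_measurable_on_sets_lebesgue) (auto elim: continuous_on_subset)
  ultimately have "(\<lambda>y. h y * g y) absolutely_integrable_on {a<..<b}"
    using g by (intro absolutely_integrable_bounded_measurable_product_real) auto
  then show ?thesis by (simp add: mult.commute)
qed

section \<open>A Gronwall argument\<close>

lemma gronwall_zero:
  fixes E :: "real \<Rightarrow> real"
  assumes E: "continuous_on {0..x} E" "\<And>y. y \<in> {0..x} \<Longrightarrow> 0 \<le> E y" and "0 \<le> K"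
    and bound: "\<And>y. y \<in> {0..x} \<Longrightarrow> E y \<le> K * integral {0..y} E" and "0 \<le> x"
  shows "E x = 0"
proof (cases "x = 0")
  case True
  then show ?thesis using bound[of x] E(2)[of x] by simp
next
  case False
  then have x: "0 < x" using \<open>0 \<le> x\<close> by simp
  define I where "I y = integral {0..y} E" for y
  define F where "F y = exp (- K * y) * I y" for y
  have "continuous_on {0..x} I" unfolding I_def
    by (rule indefinite_integral_continuous_1[OF integrable_continuous_interval[OF E(1)]])
  then have F_cont: "continuous_on {0..x} F" unfolding F_def by (intro continuous_intros)
  have F_deriv: "(F has_real_derivative (exp (- K * z) * (E z - K * I z))) (at z)" if "0 < z" "z < x" for z
  proof -
    have "(I has_real_derivative E z) (at z within {0..x})"
      unfolding I_def by (rule integral_has_real_derivative[OF E(1)]) (use that in auto)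
    moreover have "at z within {0..x} = at z" by (rule at_within_interior) (use that in auto)
    ultimately have "(I has_real_derivative E z) (at z)" by simp
    then have "(F has_real_derivative (exp (- K * z) * (- K) * I z + exp (- K * z) * E z)) (at z)"
      unfolding F_def by (auto intro!: derivative_eq_intros)
    then show ?thesis by (simp add: algebra_simps)
  qed
  obtain l z where z: "0 < z" "z < x" and l: "(F has_real_derivative l) (at z)" and F_x: "F x - F 0 = (x - 0) * l"
    using MVT[OF x F_cont] F_deriv real_differentiable_def by blast
  have "l = exp (- K * z) * (E z - K * I z)" using DERIV_unique[OF l F_deriv[OF z]] .
  moreover have "E z \<le> K * I z" using bound[of z] z by (simp add: I_def)
  ultimately have "l \<le> 0" by (simp add: mult_nonneg_nonpos)
  moreover have "F 0 = 0" by (simp add: F_def I_def)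
  ultimately have "F x \<le> 0" using F_x x by (simp add: mult_nonneg_nonpos)
  then have "I x \<le> 0" by (simp add: F_def mult_le_0_iff)
  then have "E x \<le> 0" using bound[of x] x \<open>0 \<le> K\<close> by (simp add: I_def) (meson mult_nonneg_nonpos order_trans)
  then show ?thesis using E(2)[of x] x by simp
qed

lemma weighted_square_sum_primitive:
  fixes W g :: "'i::finite \<Rightarrow> real \<Rightarrow> real"
  assumes "a \<le> b" and W: "\<And>i. continuous_on {a..b} (W i)"
    and g: "\<And>i. set_integrable lebesgue {a<..<b} (g i)"
    and W_eq: "\<And>i t. t \<in> {a..b} \<Longrightarrow> W i t = (LINT x:{a<..<t}|lebesgue. g i x)"
  shows "set_integrable lebesgue {a<..<b} (\<lambda>y. \<Sum>i\<in>UNIV. \<omega> i * g i y * W i y)"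
    and "(\<Sum>i\<in>UNIV. \<omega> i * (W i b)\<^sup>2) = 2 * (LINT y:{a<..<b}|lebesgue. (\<Sum>i\<in>UNIV. \<omega> i * g i y * W i y))"
proof -
  have gW: "set_integrable lebesgue {a<..<b} (\<lambda>y. g i y * W i y)" for i
    by (intro set_integrable_mult_continuous g W)
  then show "set_integrable lebesgue {a<..<b} (\<lambda>y. \<Sum>i\<in>UNIV. \<omega> i * g i y * W i y)"
    by (intro set_integrable_sum) (auto simp: mult.assoc)
  have square: "(W i b)\<^sup>2 = 2 * (LINT y:{a<..<b}|lebesgue. g i y * W i y)" for i
    by (rule square_primitive[OF g \<open>a \<le> b\<close>]) (simp add: W_eq)
  have "\<omega> i * (W i b)\<^sup>2 = 2 * (LINT y:{a<..<b}|lebesgue. \<omega> i * g i y * W i y)" for i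
    unfolding mult.assoc set_integral_mult_right square by (rule mult.left_commute)
  then have "(\<Sum>i\<in>UNIV. \<omega> i * (W i b)\<^sup>2) = 2 * (\<Sum>i\<in>UNIV. LINT y:{a<..<b}|lebesgue. \<omega> i * g i y * W i y)"
    by (simp add: sum_distrib_left)
  also have "\<dots> = 2 * (LINT y:{a<..<b}|lebesgue. (\<Sum>i\<in>UNIV. \<omega> i * g i y * W i y))"
    using gW by (subst set_integral_sum) (auto simp: mult.assoc)
  finally show "(\<Sum>i\<in>UNIV. \<omega> i * (W i b)\<^sup>2)
      = 2 * (LINT y:{a<..<b}|lebesgue. (\<Sum>i\<in>UNIV. \<omega> i * g i y * W i y))" .
qed

text \<open>The energy \<open>E = \<Sum>\<^sub>i \<omega>\<^sub>i W\<^sub>i\<^sup>2\<close> of primitives \<open>W\<^sub>i\<close> vanishing at \<open>0\<close> satisfies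
  \<open>E' = 2 \<Sum>\<^sub>i \<omega>\<^sub>i g\<^sub>i W\<^sub>i \<le> 2 E / \<epsilon>\<close>, hence vanishes by Gronwall.\<close>
lemma energy_inequality_imp_primitive_zero:
  fixes W g :: "'i::finite \<Rightarrow> real \<Rightarrow> real" and \<omega> :: "'i \<Rightarrow> real"
  assumes "0 < \<epsilon>" "\<And>i. 0 < \<omega> i" "0 \<le> \<tau>"
    and W: "\<And>i. continuous_on {0..\<tau>} (W i)"
    and g: "\<And>i. set_integrable lebesgue {0<..<\<tau>} (g i)"
    and W_eq: "\<And>i t. t \<in> {0..\<tau>} \<Longrightarrow> W i t = (LINT x:{0<..<t}|lebesgue. g i x)"
    and energy: "AE x in lebesgue. x \<in> {0..\<tau>} \<longrightarrow>
       \<epsilon> * (\<Sum>i\<in>UNIV. \<omega> i * g i x * W i x) \<le> (\<Sum>i\<in>UNIV. \<omega> i * (W i x)\<^sup>2)"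
  shows "W i \<tau> = 0"
proof -
  define E where "E x = (\<Sum>i\<in>UNIV. \<omega> i * (W i x)\<^sup>2)" for x
  have E_cont: "continuous_on {0..x} E" if "x \<in> {0..\<tau>}" for x
    unfolding E_def[abs_def] using that
    by (intro continuous_intros continuous_on_subset[OF W]) auto
  have E_nonneg: "0 \<le> E x" for x
    unfolding E_def using assms(2) by (intro sum_nonneg mult_nonneg_nonneg) (auto intro: less_imp_le)
  have "E x \<le> (2 / \<epsilon>) * integral {0..x} E" if x: "x \<in> {0..\<tau>}" for x
  proof -
    have x0: "0 \<le> x" using x by simp
    have W': "continuous_on {0..x} (W i)" for i using x by (intro continuous_on_subset[OF W]) auto
    have g': "set_integrable lebesgue {0<..<x} (g i)" for i using x by (intro set_integrable_subset[OF g]) auto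
    have primitive: "W i t = (LINT x:{0<..<t}|lebesgue. g i x)" if "t \<in> {0..x}" for i t
      using x that by (simp add: W_eq)
    have sum_integrable: "set_integrable lebesgue {0<..<x} (\<lambda>y. \<Sum>i\<in>UNIV. \<omega> i * g i y * W i y)"
      by (rule weighted_square_sum_primitive(1)[OF x0 W' g' primitive])
    have "E x = 2 * (LINT y:{0<..<x}|lebesgue. (\<Sum>i\<in>UNIV. \<omega> i * g i y * W i y))"
      unfolding E_def by (rule weighted_square_sum_primitive(2)[OF x0 W' g' primitive])
    also have "(LINT y:{0<..<x}|lebesgue. (\<Sum>i\<in>UNIV. \<omega> i * g i y * W i y))
        \<le> (LINT y:{0<..<x}|lebesgue. E y / \<epsilon>)"
    proof (rule set_integral_mono_AE[OF sum_integrable])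
      have "set_integrable lebesgue {0..x} (\<lambda>y. E y / \<epsilon>)"
        using \<open>0 < \<epsilon>\<close>
        by (intro absolutely_integrable_continuous_real continuous_intros E_cont[OF x]) auto
      then show "set_integrable lebesgue {0<..<x} (\<lambda>y. E y / \<epsilon>)"
        by (rule set_integrable_subset) auto
      show "AE y\<in>{0<..<x} in lebesgue. (\<Sum>i\<in>UNIV. \<omega> i * g i y * W i y) \<le> E y / \<epsilon>"
        using energy by eventually_elim (use x \<open>0 < \<epsilon>\<close> in \<open>auto simp: E_def field_simps\<close>)
    qed
    also have "(LINT y:{0<..<x}|lebesgue. E y / \<epsilon>) = integral {0..x} E / \<epsilon>"
      using E_cont[OF x] \<open>0 < \<epsilon>\<close>
      by (subst set_integral_Ioo_eq_integral) (auto intro!: continuous_intros)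
    finally show ?thesis by simp
  qed
  then have "E \<tau> = 0"
    using \<open>0 < \<epsilon>\<close> \<open>0 \<le> \<tau>\<close> E_nonneg E_cont[of \<tau>]
    by (intro gronwall_zero[where K = "2 / \<epsilon>"]) auto
  moreover have "0 \<le> \<omega> j * (W j \<tau>)\<^sup>2" for j using assms(2)[of j] by simp
  ultimately have "\<omega> i * (W i \<tau>)\<^sup>2 = 0"
    unfolding E_def by (subst (asm) sum_nonneg_eq_0_iff) auto
  then show ?thesis using assms(2)[of i] by simp
qed

section \<open>The mass-conserving obstacle equation on a graph\<close>

definition mc_obstacle_AC_equation ::
  "('v::finite \<Rightarrow> 'v \<Rightarrow> real) \<Rightarrow> real \<Rightarrow> real \<Rightarrow> ('v \<Rightarrow> real) \<Rightarrow> ('v \<Rightarrow> real) \<Rightarrow> ('v \<Rightarrow> real) \<Rightarrow> bool"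
where
  "mc_obstacle_AC_equation w r \<epsilon> U dU B \<longleftrightarrow>
     (\<forall>i. \<epsilon> * dU i + \<epsilon> * graph_laplacian w r U i - U i + mean w r U = B i - mean w r B) \<and>
     B \<in> obstacle_set U"

lemma mc_double_obstacle_AC_solutionE:
  assumes "mc_double_obstacle_AC_solution w r \<epsilon> T u \<beta>"
  obtains du where "\<forall>i. continuous_on T (\<lambda>t. u t i)" "H1_loc_deriv T u du"
    "AE t in lebesgue. t \<in> T \<longrightarrow> mc_obstacle_AC_equation w r \<epsilon> (u t) (du t) (\<beta> t)"
  using assms unfolding mc_double_obstacle_AC_solution_def mc_obstacle_AC_equation_def by blast

lemma deg_nonneg: "weighted_graph w \<Longrightarrow> 0 \<le> deg w i"
  unfolding deg_def weighted_graph_def by (intro sum_nonneg) simp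

lemma deg_eq_0_iff: "weighted_graph w \<Longrightarrow> deg w i = 0 \<longleftrightarrow> (\<forall>j. w i j = 0)"
  unfolding deg_def weighted_graph_def by (subst sum_nonneg_eq_0_iff) auto

text \<open>By connectedness, a vertex of degree \<open>0\<close> is the only vertex.\<close>
lemma deg_all_pos_or_all_zero:
  assumes w: "weighted_graph w"
  shows "(\<forall>i. 0 < deg w i) \<or> (\<forall>i. deg w i = 0)"
proof (rule ccontr)
  assume "\<not> ?thesis"
  then obtain i k where i: "deg w i = 0" and k: "deg w k \<noteq> 0"
    using deg_nonneg[OF w] by (metis order_le_less)
  have "(i, k) \<in> {(x, y). 0 < w x y}\<^sup>*" using w by (simp add: weighted_graph_def)
  then show False
  proof (cases rule: converse_rtranclE)
    case (step y)
    then show False using i deg_eq_0_iff[OF w] by auto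
  qed (use i k in simp)
qed

lemma deg_powr_mult_graph_laplacian:
  assumes "weighted_graph w"
  shows "deg w i powr r * graph_laplacian w r Z i = (\<Sum>j\<in>UNIV. w i j * (Z i - Z j))"
proof (cases "deg w i = 0")
  case True
  then show ?thesis using deg_eq_0_iff[OF assms] by (simp add: graph_laplacian_def)
next
  case False
  then have "deg w i powr r * deg w i powr (- r) = 1"
    using deg_nonneg[OF assms, of i] by (simp add: powr_add[symmetric])
  then show ?thesis unfolding graph_laplacian_def by (simp add: mult.assoc[symmetric])
qed

lemma inner_V_graph_laplacian:
  assumes "weighted_graph w"
  shows "inner_V w r (graph_laplacian w r Z) X = (\<Sum>i\<in>UNIV. \<Sum>j\<in>UNIV. w i j * (Z i - Z j) * X i)"
proof -
  have "graph_laplacian w r Z i * X i * deg w i powr r = (\<Sum>j\<in>UNIV. w i j * (Z i - Z j) * X i)" for i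
    using deg_powr_mult_graph_laplacian[OF assms, of i r Z] by (simp add: sum_distrib_left mult_ac)
  then show ?thesis unfolding inner_V_def by simp
qed

lemma mass_graph_laplacian:
  assumes "weighted_graph w"
  shows "mass w r (graph_laplacian w r Z) = 0"
proof -
  have sym: "w i j = w j i" for i j using assms by (simp add: weighted_graph_def)
  have "(\<Sum>i\<in>UNIV. \<Sum>j\<in>UNIV. w i j * Z j) = (\<Sum>i\<in>UNIV. \<Sum>j\<in>UNIV. w i j * Z i)"
    by (subst sum.swap) (simp add: sym)
  then show ?thesis
    unfolding mass_def inner_V_graph_laplacian[OF assms]
    by (simp add: right_diff_distrib sum_subtractf)
qed

text \<open>Symmetrising the double sum gives the Dirichlet energy \<open>\<Sum>\<^sub>i\<^sub>j w\<^sub>i\<^sub>j (Z\<^sub>i - Z\<^sub>j)\<^sup>2 / 2\<close>.\<close>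
lemma inner_V_graph_laplacian_self_nonneg:
  assumes "weighted_graph w"
  shows "0 \<le> inner_V w r (graph_laplacian w r Z) Z"
proof -
  have sym: "w i j = w j i" and nonneg: "0 \<le> w i j" for i j
    using assms by (simp_all add: weighted_graph_def)
  define S where "S = (\<Sum>i\<in>UNIV. \<Sum>j\<in>UNIV. w i j * (Z i - Z j) * Z i)"
  have "S = (\<Sum>i\<in>UNIV. \<Sum>j\<in>UNIV. w i j * (Z j - Z i) * Z j)"
    unfolding S_def by (subst sum.swap) (simp add: sym)
  then have "2 * S = S + (\<Sum>i\<in>UNIV. \<Sum>j\<in>UNIV. w i j * (Z j - Z i) * Z j)" by simp
  also have "\<dots> = (\<Sum>i\<in>UNIV. \<Sum>j\<in>UNIV. w i j * (Z i - Z j)\<^sup>2)"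
    unfolding S_def sum.distrib[symmetric]
    by (intro sum.cong refl) (simp add: power2_eq_square algebra_simps)
  finally have "2 * S = (\<Sum>i\<in>UNIV. \<Sum>j\<in>UNIV. w i j * (Z i - Z j)\<^sup>2)" .
  moreover have "0 \<le> (\<Sum>i\<in>UNIV. \<Sum>j\<in>UNIV. w i j * (Z i - Z j)\<^sup>2)"
    by (intro sum_nonneg mult_nonneg_nonneg nonneg) simp
  ultimately show ?thesis by (simp add: inner_V_graph_laplacian[OF assms] S_def)
qed

lemma mean_mult_mass_one: "mean w r X * mass w r (\<lambda>_. 1) = mass w r X"
proof (cases "mass w r (\<lambda>_. 1) = 0")
  case True
  then have "deg w i powr r = 0" for i
    by (simp add: mass_def inner_V_def sum_nonneg_eq_0_iff)
  then show ?thesis by (simp add: mass_def inner_V_def)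
qed (simp add: mean_def)

lemma obstacle_set_diff_mult_nonpos:
  assumes "B \<in> obstacle_set U" "G \<in> obstacle_set V"
  shows "(B i - G i) * (U i - V i) \<le> 0"
proof -
  have U: "0 \<le> U i" "U i \<le> 1" and V: "0 \<le> V i" "V i \<le> 1"
    and B: "(U i = 0 \<longrightarrow> 0 \<le> B i) \<and> (0 < U i \<and> U i < 1 \<longrightarrow> B i = 0) \<and> (U i = 1 \<longrightarrow> B i \<le> 0)"
    and G: "(V i = 0 \<longrightarrow> 0 \<le> G i) \<and> (0 < V i \<and> V i < 1 \<longrightarrow> G i = 0) \<and> (V i = 1 \<longrightarrow> G i \<le> 0)"
    using assms by (auto simp: obstacle_set_def split: if_splits)
  consider "V i < U i" | "U i < V i" | "U i = V i" by linarith
  then show ?thesis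
  proof cases
    case 1
    then have "B i \<le> 0" using B U V by (cases "U i = 1") auto
    moreover have "0 \<le> G i" using G U V 1 by (cases "V i = 0") auto
    ultimately show ?thesis using 1 by (simp add: mult_nonpos_nonneg)
  next
    case 2
    then have "0 \<le> B i" using B U V by (cases "U i = 0") auto
    moreover have "G i \<le> 0" using G U V 2 by (cases "V i = 1") auto
    ultimately show ?thesis using 2 by (simp add: mult_nonneg_nonpos)
  qed simp
qed

lemma graph_laplacian_diff:
  "graph_laplacian w r (\<lambda>j. U j - V j) i = graph_laplacian w r U i - graph_laplacian w r V i"
  unfolding graph_laplacian_def
  by (simp add: right_diff_distrib[symmetric] sum_subtractf[symmetric] algebra_simps)

lemma mean_diff: "mean w r (\<lambda>i. U i - V i) = mean w r U - mean w r V"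
  unfolding mean_def mass_def inner_V_def
  by (simp add: sum_subtractf left_diff_distrib diff_divide_distrib)

lemma inner_V_mc_obstacle_AC_equation_diff:
  assumes "mc_obstacle_AC_equation w r \<epsilon> U dU B" "mc_obstacle_AC_equation w r \<epsilon> V dV G"
  defines "Z \<equiv> \<lambda>i. U i - V i" and "\<zeta> \<equiv> \<lambda>i. B i - G i"
  shows "\<epsilon> * inner_V w r (\<lambda>i. dU i - dV i) X + \<epsilon> * inner_V w r (graph_laplacian w r Z) X
      - inner_V w r Z X + mean w r Z * mass w r X = inner_V w r \<zeta> X - mean w r \<zeta> * mass w r X"
proof -
  have "\<epsilon> * (dU i - dV i) + \<epsilon> * graph_laplacian w r Z i - Z i + mean w r Z = \<zeta> i - mean w r \<zeta>" for i
    using assms(1,2) unfolding mc_obstacle_AC_equation_def Z_def \<zeta>_def graph_laplacian_diff mean_diff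
    by (simp add: algebra_simps)
  then have "(\<Sum>i\<in>UNIV. (\<epsilon> * (dU i - dV i) + \<epsilon> * graph_laplacian w r Z i - Z i + mean w r Z) * X i * deg w i powr r)
      = (\<Sum>i\<in>UNIV. (\<zeta> i - mean w r \<zeta>) * X i * deg w i powr r)" by simp
  then show ?thesis
    by (simp add: inner_V_def mass_def algebra_simps sum.distrib sum_subtractf sum_distrib_left)
qed

lemma mc_obstacle_AC_equation_mass_diff:
  assumes "weighted_graph w" "0 < \<epsilon>"
    and "mc_obstacle_AC_equation w r \<epsilon> U dU B" "mc_obstacle_AC_equation w r \<epsilon> V dV G"
  shows "mass w r (\<lambda>i. dU i - dV i) = 0"
  using inner_V_mc_obstacle_AC_equation_diff[OF assms(3,4), of "\<lambda>_. 1"] assms(2)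
  by (simp add: mass_def[symmetric] mass_graph_laplacian[OF assms(1)] mean_mult_mass_one)

lemma mc_obstacle_AC_equation_energy_inequality:
  assumes "weighted_graph w" "0 < \<epsilon>"
    and "mc_obstacle_AC_equation w r \<epsilon> U dU B" "mc_obstacle_AC_equation w r \<epsilon> V dV G"
    and "mass w r (\<lambda>i. U i - V i) = 0"
  shows "\<epsilon> * inner_V w r (\<lambda>i. dU i - dV i) (\<lambda>i. U i - V i) \<le> inner_V w r (\<lambda>i. U i - V i) (\<lambda>i. U i - V i)"
proof -
  have "(B i - G i) * (U i - V i) * deg w i powr r \<le> 0" for i
    using assms(3,4) obstacle_set_diff_mult_nonpos[of "B" U G V i]
    by (simp add: mc_obstacle_AC_equation_def mult_nonpos_nonneg)
  then have "inner_V w r (\<lambda>i. B i - G i) (\<lambda>i. U i - V i) \<le> 0"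
    unfolding inner_V_def by (rule sum_nonpos)
  moreover have "0 \<le> \<epsilon> * inner_V w r (graph_laplacian w r (\<lambda>i. U i - V i)) (\<lambda>i. U i - V i)"
    using assms(2) inner_V_graph_laplacian_self_nonneg[OF assms(1)] by simp
  ultimately show ?thesis
    using inner_V_mc_obstacle_AC_equation_diff[OF assms(3,4), of "\<lambda>i. U i - V i"] assms(5) by simp
qed

lemma mc_obstacle_AC_equation_energy_inequality_deg_0:
  assumes "\<forall>i. deg w i = 0"
    and "mc_obstacle_AC_equation w r \<epsilon> U dU B" "mc_obstacle_AC_equation w r \<epsilon> V dV G"
  shows "\<epsilon> * ((dU i - dV i) * (U i - V i)) \<le> (U i - V i)\<^sup>2"
proof -
  have "graph_laplacian w r X i = 0" "mean w r X = 0" for X i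
    using assms(1) by (simp_all add: graph_laplacian_def mean_def mass_def inner_V_def)
  then have "\<epsilon> * dU i - U i = B i" "\<epsilon> * dV i - V i = G i"
    using assms(2,3) by (simp_all add: mc_obstacle_AC_equation_def)
  then have "\<epsilon> * ((dU i - dV i) * (U i - V i)) = ((B i + U i) - (G i + V i)) * (U i - V i)"
    by (metis (no_types) diff_add_cancel mult.assoc right_diff_distrib)
  also have "\<dots> = (U i - V i)\<^sup>2 + (B i - G i) * (U i - V i)"
    by (simp add: algebra_simps power2_eq_square)
  finally have "\<epsilon> * ((dU i - dV i) * (U i - V i)) = (U i - V i)\<^sup>2 + (B i - G i) * (U i - V i)" .
  then show ?thesis
    using obstacle_set_diff_mult_nonpos[of B U G V i] assms(2,3)
    by (simp add: mc_obstacle_AC_equation_def)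
qed

text \<open>With \<open>0 powr r = 0\<close>, the inner product of \<open>\<V>\<close> vanishes identically on a graph with a
  single vertex (degree \<open>0\<close>); there the energy is measured with unit weights instead.\<close>
definition vertex_weight :: "('v::finite \<Rightarrow> 'v \<Rightarrow> real) \<Rightarrow> real \<Rightarrow> 'v \<Rightarrow> real" where
  "vertex_weight w r i = (if deg w i = 0 then 1 else deg w i powr r)"

lemma vertex_weight_pos: "weighted_graph w \<Longrightarrow> 0 < vertex_weight w r i"
  using deg_nonneg[of w i] by (simp add: vertex_weight_def)

lemma mc_obstacle_AC_equation_weighted_energy_inequality:
  assumes "weighted_graph w" "0 < \<epsilon>"
    and "mc_obstacle_AC_equation w r \<epsilon> U dU B" "mc_obstacle_AC_equation w r \<epsilon> V dV G"
    and "mass w r (\<lambda>i. U i - V i) = 0"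
  shows "\<epsilon> * (\<Sum>i\<in>UNIV. vertex_weight w r i * (dU i - dV i) * (U i - V i))
      \<le> (\<Sum>i\<in>UNIV. vertex_weight w r i * (U i - V i)\<^sup>2)"
  using deg_all_pos_or_all_zero[OF assms(1)]
proof
  assume "\<forall>i. 0 < deg w i"
  then have "vertex_weight w r i = deg w i powr r" for i
    by (metis vertex_weight_def less_irrefl)
  then show ?thesis
    using mc_obstacle_AC_equation_energy_inequality[OF assms]
    by (simp add: inner_V_def power2_eq_square mult_ac)
next
  assume deg: "\<forall>i. deg w i = 0"
  show ?thesis
    using mc_obstacle_AC_equation_energy_inequality_deg_0[OF deg assms(3,4)]
    by (simp add: vertex_weight_def deg sum_distrib_left sum_mono mult_ac)
qed

lemma mass_set_integral_eq_0:
  fixes g :: "'v::finite \<Rightarrow> real \<Rightarrow> real"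
  assumes g: "\<And>i. set_integrable lebesgue A (g i)"
    and zero: "AE x in lebesgue. x \<in> A \<longrightarrow> mass w r (\<lambda>i. g i x) = 0"
  shows "mass w r (\<lambda>i. LINT x:A|lebesgue. g i x) = 0"
proof -
  have "mass w r (\<lambda>i. LINT x:A|lebesgue. g i x) = (LINT x:A|lebesgue. mass w r (\<lambda>i. g i x))"
    using g by (simp add: mass_def inner_V_def set_integral_sum)
  also have "\<dots> = 0"
    unfolding set_lebesgue_integral_def
    by (rule integral_eq_zero_AE) (use zero in \<open>eventually_elim, simp add: indicator_def\<close>)
  finally show ?thesis .
qed

section \<open>Uniqueness\<close>

lemma H1_loc_deriv_AE_eq:
  fixes du dv :: "real \<Rightarrow> 'v::finite \<Rightarrow> real"
  assumes T: "is_interval T"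
    and u: "H1_loc_deriv T u du" "\<forall>i. continuous_on T (\<lambda>t. u t i)"
    and v: "H1_loc_deriv T v dv" "\<forall>i. continuous_on T (\<lambda>t. v t i)"
    and uv: "\<forall>t\<in>T. u t = v t"
  shows "AE t in lebesgue. t \<in> T \<longrightarrow> du t = dv t"
proof -
  have "AE t in lebesgue. t \<in> T \<longrightarrow> du t i - dv t i = 0" for i
  proof (rule AE_zero_if_interval_integrals_zero[OF T])
    fix s t assume st: "s \<in> T" "t \<in> T"
    show "set_integrable lebesgue {s<..<t} (\<lambda>x. du x i - dv x i)"
      by (rule set_integral_diff(1)[OF H1_loc_deriv_set_integrable[OF u(1) st]
          H1_loc_deriv_set_integrable[OF v(1) st]])
    assume "s \<le> t"
    have "(LINT x:{s<..<t}|lebesgue. du x i - dv x i)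
        = (LINT x:{s<..<t}|lebesgue. du x i) - (LINT x:{s<..<t}|lebesgue. dv x i)"
      by (rule set_integral_diff(2)[OF H1_loc_deriv_set_integrable[OF u(1) st]
          H1_loc_deriv_set_integrable[OF v(1) st]])
    also have "\<dots> = (u t i - u s i) - (v t i - v s i)"
      using H1_loc_deriv_FTC[OF u(1) _ T st \<open>s \<le> t\<close>] H1_loc_deriv_FTC[OF v(1) _ T st \<open>s \<le> t\<close>]
        u(2) v(2) by simp
    finally show "(LINT x:{s<..<t}|lebesgue. du x i - dv x i) = 0" using uv st by simp
  qed
  then have "AE t in lebesgue. \<forall>i. t \<in> T \<longrightarrow> du t i - dv t i = 0"
    by (rule eventually_all_finite)
  then show ?thesis by eventually_elim (auto simp: fun_eq_iff)
qed

lemma mc_obstacle_AC_equations_coincide: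
  fixes w :: "'v::finite \<Rightarrow> 'v \<Rightarrow> real" and U dU B V dV G :: "real \<Rightarrow> 'v \<Rightarrow> real"
  assumes w: "weighted_graph w" and "0 < \<epsilon>" "0 \<le> \<tau>"
    and cont: "\<And>i. continuous_on {0..\<tau>} (\<lambda>t. U t i - V t i)"
    and int: "\<And>i. set_integrable lebesgue {0<..<\<tau>} (\<lambda>t. dU t i - dV t i)"
    and FTC: "\<And>i t. t \<in> {0..\<tau>} \<Longrightarrow> U t i - V t i = (LINT x:{0<..<t}|lebesgue. dU x i - dV x i)"
    and equations: "AE t in lebesgue. t \<in> {0..\<tau>} \<longrightarrow>
      mc_obstacle_AC_equation w r \<epsilon> (U t) (dU t) (B t) \<and> mc_obstacle_AC_equation w r \<epsilon> (V t) (dV t) (G t)"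
  shows "U \<tau> = V \<tau>"
proof -
  have mass: "mass w r (\<lambda>i. U t i - V t i) = 0" if "t \<in> {0..\<tau>}" for t
    unfolding FTC[OF that]
  proof (rule mass_set_integral_eq_0)
    show "set_integrable lebesgue {0<..<t} (\<lambda>x. dU x i - dV x i)" for i
      using that by (intro set_integrable_subset[OF int]) auto
    show "AE x in lebesgue. x \<in> {0<..<t} \<longrightarrow> mass w r (\<lambda>i. dU x i - dV x i) = 0"
      using equations by eventually_elim
        (use that in \<open>auto intro: mc_obstacle_AC_equation_mass_diff[OF w \<open>0 < \<epsilon>\<close>]\<close>)
  qed
  have energy: "AE t in lebesgue. t \<in> {0..\<tau>} \<longrightarrow>
      \<epsilon> * (\<Sum>i\<in>UNIV. vertex_weight w r i * (dU t i - dV t i) * (U t i - V t i))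
        \<le> (\<Sum>i\<in>UNIV. vertex_weight w r i * (U t i - V t i)\<^sup>2)"
    using equations by eventually_elim
      (use mass in \<open>auto intro: mc_obstacle_AC_equation_weighted_energy_inequality[OF w \<open>0 < \<epsilon>\<close>]\<close>)
  have "U \<tau> i - V \<tau> i = 0" for i
    by (rule energy_inequality_imp_primitive_zero[where W = "\<lambda>i t. U t i - V t i",
          OF \<open>0 < \<epsilon>\<close> vertex_weight_pos[OF w] \<open>0 \<le> \<tau>\<close> cont int FTC energy])
  then show ?thesis by (simp add: fun_eq_iff)
qed

lemma mc_double_obstacle_AC_solutions_coincide:
  fixes w :: "'v::finite \<Rightarrow> 'v \<Rightarrow> real" and u \<beta> v \<gamma> :: "real \<Rightarrow> 'v \<Rightarrow> real"
  assumes w: "weighted_graph w" and "0 < \<epsilon>" and T: "is_interval T" "0 \<in> T" "T \<subseteq> {0..}"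
    and u: "mc_double_obstacle_AC_solution w r \<epsilon> T u \<beta>"
    and v: "mc_double_obstacle_AC_solution w r \<epsilon> T v \<gamma>"
    and "u 0 = v 0" and "\<tau> \<in> T"
  shows "u \<tau> = v \<tau>"
proof -
  obtain du where u: "\<forall>i. continuous_on T (\<lambda>t. u t i)" "H1_loc_deriv T u du"
    "AE t in lebesgue. t \<in> T \<longrightarrow> mc_obstacle_AC_equation w r \<epsilon> (u t) (du t) (\<beta> t)"
    using u by (rule mc_double_obstacle_AC_solutionE)
  obtain dv where v: "\<forall>i. continuous_on T (\<lambda>t. v t i)" "H1_loc_deriv T v dv"
    "AE t in lebesgue. t \<in> T \<longrightarrow> mc_obstacle_AC_equation w r \<epsilon> (v t) (dv t) (\<gamma> t)"
    using v by (rule mc_double_obstacle_AC_solutionE)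
  have sub: "{0..\<tau>} \<subseteq> T" using mem_is_interval_1_I[OF T(1,2) \<open>\<tau> \<in> T\<close>] by auto
  show ?thesis
  proof (rule mc_obstacle_AC_equations_coincide[OF w \<open>0 < \<epsilon>\<close>])
    show "0 \<le> \<tau>" using T(3) \<open>\<tau> \<in> T\<close> by auto
    show "continuous_on {0..\<tau>} (\<lambda>t. u t i - v t i)" for i
      using u(1) v(1) sub by (intro continuous_intros) (auto elim: continuous_on_subset)
    show "set_integrable lebesgue {0<..<\<tau>} (\<lambda>t. du t i - dv t i)" for i
      by (rule set_integral_diff(1)[OF H1_loc_deriv_set_integrable[OF u(2) T(2) \<open>\<tau> \<in> T\<close>]
          H1_loc_deriv_set_integrable[OF v(2) T(2) \<open>\<tau> \<in> T\<close>]])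
    show "u t i - v t i = (LINT x:{0<..<t}|lebesgue. du x i - dv x i)" if "t \<in> {0..\<tau>}" for i t
    proof -
      have t: "t \<in> T" "0 \<le> t" using that sub by auto
      have "(LINT x:{0<..<t}|lebesgue. du x i - dv x i)
          = (LINT x:{0<..<t}|lebesgue. du x i) - (LINT x:{0<..<t}|lebesgue. dv x i)"
        by (rule set_integral_diff(2)[OF H1_loc_deriv_set_integrable[OF u(2) T(2) t(1)]
            H1_loc_deriv_set_integrable[OF v(2) T(2) t(1)]])
      then show ?thesis
        using H1_loc_deriv_FTC[OF u(2) _ T(1,2) t, of i] H1_loc_deriv_FTC[OF v(2) _ T(1,2) t, of i]
          u(1) v(1) \<open>u 0 = v 0\<close> by simp
    qed
    show "AE t in lebesgue. t \<in> {0..\<tau>} \<longrightarrow>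
        mc_obstacle_AC_equation w r \<epsilon> (u t) (du t) (\<beta> t) \<and> mc_obstacle_AC_equation w r \<epsilon> (v t) (dv t) (\<gamma> t)"
      using u(3) v(3) by eventually_elim (use sub in auto)
  qed
qed

lemma mc_double_obstacle_AC_solutions_common_derivative:
  fixes w :: "'v::finite \<Rightarrow> 'v \<Rightarrow> real" and u \<beta> v \<gamma> :: "real \<Rightarrow> 'v \<Rightarrow> real"
  assumes w: "weighted_graph w" and "0 < \<epsilon>" and T: "is_interval T" "0 \<in> T" "T \<subseteq> {0..}"
    and u: "mc_double_obstacle_AC_solution w r \<epsilon> T u \<beta>"
    and v: "mc_double_obstacle_AC_solution w r \<epsilon> T v \<gamma>"
    and "u 0 = v 0"
  obtains du where "AE t in lebesgue. t \<in> T \<longrightarrow>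
    mc_obstacle_AC_equation w r \<epsilon> (u t) (du t) (\<beta> t) \<and> mc_obstacle_AC_equation w r \<epsilon> (u t) (du t) (\<gamma> t)"
proof -
  obtain du where du: "\<forall>i. continuous_on T (\<lambda>t. u t i)" "H1_loc_deriv T u du"
    "AE t in lebesgue. t \<in> T \<longrightarrow> mc_obstacle_AC_equation w r \<epsilon> (u t) (du t) (\<beta> t)"
    using u by (rule mc_double_obstacle_AC_solutionE)
  obtain dv where dv: "\<forall>i. continuous_on T (\<lambda>t. v t i)" "H1_loc_deriv T v dv"
    "AE t in lebesgue. t \<in> T \<longrightarrow> mc_obstacle_AC_equation w r \<epsilon> (v t) (dv t) (\<gamma> t)"
    using v by (rule mc_double_obstacle_AC_solutionE)
  have uv: "\<forall>t\<in>T. u t = v t"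
    using mc_double_obstacle_AC_solutions_coincide[OF w \<open>0 < \<epsilon>\<close> T u v \<open>u 0 = v 0\<close>] by blast
  have "AE t in lebesgue. t \<in> T \<longrightarrow> du t = dv t"
    by (rule H1_loc_deriv_AE_eq[OF T(1) du(2,1) dv(2,1) uv])
  with du(3) dv(3) have "AE t in lebesgue. t \<in> T \<longrightarrow>
      mc_obstacle_AC_equation w r \<epsilon> (u t) (du t) (\<beta> t) \<and> mc_obstacle_AC_equation w r \<epsilon> (u t) (du t) (\<gamma> t)"
    by eventually_elim (use uv in auto)
  then show thesis by (rule that)
qed

lemma mc_obstacle_AC_equation_multiplier_unique:
  assumes "mc_obstacle_AC_equation w r \<epsilon> U dU B" "mc_obstacle_AC_equation w r \<epsilon> U dU G"
  shows "(\<forall>i. B i - G i = mean w r B - mean w r G) \<and> ((\<exists>i. 0 < U i \<and> U i < 1) \<longrightarrow> B = G)"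
proof -
  have diff: "B i - G i = mean w r B - mean w r G" for i
  proof -
    have "B i - mean w r B = G i - mean w r G"
      using assms unfolding mc_obstacle_AC_equation_def by metis
    then show ?thesis by linarith
  qed
  moreover have "B = G" if "0 < U i" "U i < 1" for i
  proof -
    have "B i = 0" "G i = 0"
      using assms that by (auto simp: mc_obstacle_AC_equation_def obstacle_set_def split: if_splits)
    then show "B = G" using diff diff[of i] by (auto simp: fun_eq_iff)
  qed
  ultimately show ?thesis by blast
qed

theorem theorem9:
  fixes w :: "'v::finite \<Rightarrow> 'v \<Rightarrow> real"
    and r \<epsilon> :: real and T :: "real set"
    and u \<beta> v \<gamma> :: "real \<Rightarrow> 'v \<Rightarrow> real"
  assumes "weighted_graph w"
    and "0 \<le> r" and "r \<le> 1" and "0 < \<epsilon>"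
    and "(\<exists>T0>0. T = {0..T0}) \<or> T = {0..}"
    and "mc_double_obstacle_AC_solution w r \<epsilon> T u \<beta>"
    and "mc_double_obstacle_AC_solution w r \<epsilon> T v \<gamma>"
    and "u 0 = v 0"
  shows "(\<forall>t\<in>T. u t = v t) \<and>
    (\<exists>T'. T' \<subseteq> T \<and> T - T' \<in> null_sets lebesgue \<and>
       (\<forall>t\<in>T'. (\<forall>i. \<beta> t i - \<gamma> t i = mean w r (\<beta> t) - mean w r (\<gamma> t)) \<and>
          ((\<exists>i. 0 < u t i \<and> u t i < 1) \<longrightarrow> \<beta> t = \<gamma> t)))"
proof -
  have T: "is_interval T" "0 \<in> T" "T \<subseteq> {0..}" using assms(5) by auto
  have uv: "\<forall>t\<in>T. u t = v t"
    using mc_double_obstacle_AC_solutions_coincide[OF assms(1,4) T assms(6-8)] by blast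
  obtain du where "AE t in lebesgue. t \<in> T \<longrightarrow>
      mc_obstacle_AC_equation w r \<epsilon> (u t) (du t) (\<beta> t) \<and> mc_obstacle_AC_equation w r \<epsilon> (u t) (du t) (\<gamma> t)"
    by (rule mc_double_obstacle_AC_solutions_common_derivative[OF assms(1,4) T assms(6-8)])
  then obtain N where N: "N \<in> null_sets lebesgue" "\<And>t. t \<in> space lebesgue - N \<Longrightarrow> t \<in> T \<longrightarrow>
      mc_obstacle_AC_equation w r \<epsilon> (u t) (du t) (\<beta> t) \<and> mc_obstacle_AC_equation w r \<epsilon> (u t) (du t) (\<gamma> t)"
    by (rule AE_E3) blast
  show ?thesis
  proof (intro conjI exI[of _ "T - N"])
    show "T - (T - N) \<in> null_sets lebesgue"
      using N(1) by (rule null_sets_completion_subset[rotated]) auto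
    show "\<forall>t\<in>T - N. (\<forall>i. \<beta> t i - \<gamma> t i = mean w r (\<beta> t) - mean w r (\<gamma> t)) \<and>
        ((\<exists>i. 0 < u t i \<and> u t i < 1) \<longrightarrow> \<beta> t = \<gamma> t)"
      using N(2) by (auto dest: mc_obstacle_AC_equation_multiplier_unique)
  qed (use uv in auto)
qed

end
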